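(* Let $T\ge 2$, $J=\lceil\sqrt{T}\rceil$, and $b^j=(j-1)/\sqrt{T}$ for $j\in\{1,\dots,J\}$. Let $G$ be a CDF on $[0,1]$, and define the bins $I_1=\{0\}$ and $I_j=(b^{j-1},b^j]$ for $2\le j\le J$, so that $G(b^j)=\sum_{i\le j}\mathbb{P}_{m\sim G}(m\in I_i)$. Let $\Phi$ be a finite index set, and for $\tau\in\Phi$ let $b_\tau\in[0,1]$ be bids and $m_\tau$ HOBs such that, conditionally on $(b_\tau)_{\tau\in\Phi}$ (and the contexts), the $m_\tau$, $\tau\in\Phi$, are mutually independent with CDF $G$. Independently, let $m'_1,\dots,m'_{T_0}$ be i.i.d. with CDF $G$, where $T_0\ge\lceil\sqrt{T}\rceil$, and set $\widehat p_0^k=\frac{1}{T_0}\sum_{s=1}^{T_0}\mathbb{1}[m'_s\in I_k]$. For each $j$ let $n^j=\sum_{\tau\in\Phi}\mathbb{1}[b_\tau\ge b^j]$, \[ \widehat p^j=\frac{\sum_{\tau\in\Phi}\mathbb{1}[b_\tau\ge b^j]\,\mathbb{1}[m_\tau\in I_j]}{n^j},\qquad \widehat G(b^j)=\sum_{i\le j}\widehat p^i, \] \[ u(b^j)=8\sqrt{\sum_{k\le j}\frac{2\log T}{n^k}\left(\widehat p_0^k+\frac{12\log T}{\sqrt T}\right)}+\frac{8\log T}{n^j}, \] with the conventions $\widehat p^j=0$ if $n^j=0$ and $u(b^j)=+\infty$ if $n^k=0$ for some $k\le j$. Then with probability at least $1-T^{-3}$, simultaneously for every $j\in\{1,\dots,J\}$,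 \[ \left|G(b^j)-\widehat G(b^j)\right|\le u(b^j)\quad\text{and}\quad \frac{1}{\sqrt T}\left|\sum_{i\le j}\left(G(b^i)-\widehat G(b^i)\right)\right|\le u(b^j). \]
   Context: Here $m_\tau$ plays the role of the highest competing bid in a second-price auction; the bidder only observes $\mathbb{1}[b_\tau\ge m_\tau]\,m_\tau$ (the payment when she wins), which suffices to compute $\widehat p^j$ since $\mathbb{1}[b_\tau\ge b^j]\mathbb{1}[m_\tau\in I_j]$ is determined by it. *)

theory Defs
  imports "HOL-Probability.Probability"
begin

definition Jnum :: "nat \<Rightarrow> nat" where
  "Jnum T = nat \<lceil>sqrt (real T)\<rceil>"

definition bgrid :: "nat \<Rightarrow> nat \<Rightarrow> real" where
  "bgrid T j = (real j - 1) / sqrt (real T)"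

definition bin :: "nat \<Rightarrow> nat \<Rightarrow> real set" where
  "bin T j = (if j = 1 then {0} else {bgrid T (j - 1)<..bgrid T j})"

definition ncount :: "nat \<Rightarrow> 'i set \<Rightarrow> ('i \<Rightarrow> real) \<Rightarrow> nat \<Rightarrow> nat" where
  "ncount T \<Phi> bid j = card {\<tau>\<in>\<Phi>. bid \<tau> \<ge> bgrid T j}"

definition phat :: "nat \<Rightarrow> 'i set \<Rightarrow> ('i \<Rightarrow> real) \<Rightarrow> ('i \<Rightarrow> real) \<Rightarrow> nat \<Rightarrow> real" where
  "phat T \<Phi> bid hob j =
     (if ncount T \<Phi> bid j = 0 then 0
      else (\<Sum>\<tau>\<in>\<Phi>. (if bid \<tau> \<ge> bgrid T j \<and> hob \<tau> \<in> bin T j then 1 else 0))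
           / real (ncount T \<Phi> bid j))"

definition Ghat :: "nat \<Rightarrow> 'i set \<Rightarrow> ('i \<Rightarrow> real) \<Rightarrow> ('i \<Rightarrow> real) \<Rightarrow> nat \<Rightarrow> real" where
  "Ghat T \<Phi> bid hob j = (\<Sum>i=1..j. phat T \<Phi> bid hob i)"

definition phat0 :: "nat \<Rightarrow> nat \<Rightarrow> (nat \<Rightarrow> real) \<Rightarrow> nat \<Rightarrow> real" where
  "phat0 T T0 hob' k = (1 / real T0) * (\<Sum>s=1..T0. indicator (bin T k) (hob' s))"

definition ubound :: "nat \<Rightarrow> nat \<Rightarrow> 'i set \<Rightarrow> ('i \<Rightarrow> real) \<Rightarrow> (nat \<Rightarrow> real) \<Rightarrow> nat \<Rightarrow> ereal" where
  "ubound T T0 \<Phi> bid hob' j =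
     (if \<exists>k\<in>{1..j}. ncount T \<Phi> bid k = 0 then \<infinity>
      else ereal (8 * sqrt (\<Sum>k=1..j. 2 * ln (real T) / real (ncount T \<Phi> bid k)
                              * (phat0 T T0 hob' k + 12 * ln (real T) / sqrt (real T)))
                 + 8 * ln (real T) / real (ncount T \<Phi> bid j)))"

end

theory Submission
  imports Defs
begin

(* Discretise every highest competing bid by the bin it falls in. The estimator depends on the
   bids only through the finite pattern of grid points each bid exceeds, and conditionally on that
   pattern the bin labels of the m_tau are i.i.d. with the bin probabilities
   p^k = G(b^k) - G(b^(k-1)); the labels of the m'_s are i.i.d. as well. Thus
   hat G(b^j) - G(b^j) is a sum of independent centred terms bounded by 1/n^j whose variances add up
   to at most sum_(k <= j) p^k / n^k, and Bernstein's inequality bounds it by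
   2 sqrt(8 log T sum_(k <= j) p^k / n^k) + 16 log T / (3 n^j) except with probability 2 T^(-8).
   A sub-Gaussian lower tail gives p^k <= 2 (hat p_0^k + 12 log T / sqrt T) except with probability
   T^(-8). On the intersection of these events both inequalities hold deterministically (the second
   one because j <= sqrt 2 sqrt T), and a union bound over 3 J <= 3 T events leaves a failure
   probability of at most T^(-3). *)

section \<open>Elementary inequalities\<close>

lemma exp_le_quadratic_of_nonpos:
  fixes z :: real
  assumes "z \<le> 0"
  shows "exp z \<le> 1 + z + z\<^sup>2 / 2"
proof -
  obtain t where "exp z = (\<Sum>n<3. z ^ n / fact n) + exp t / fact 3 * z ^ 3"
    using Maclaurin_exp_le[of z 3] by blast
  moreover have "exp t / fact 3 * z ^ 3 \<le> 0"
    using assms by (intro mult_nonneg_nonpos) (auto simp: power_odd_eq)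
  moreover have "(\<Sum>n<3. z ^ n / fact n) = 1 + z + z\<^sup>2 / 2"
    by (simp add: numeral_3_eq_3 power2_eq_square)
  ultimately show ?thesis by linarith
qed

lemma exp_le_quadratic:
  fixes z :: real
  assumes "z \<le> 3/2"
  shows "exp z \<le> 1 + z + z\<^sup>2"
proof (cases "0 \<le> z")
  case True
  have geometric: "(\<lambda>n. z\<^sup>2 / 2 * (1/2) ^ n) sums z\<^sup>2"
    using sums_mult[OF geometric_sums[of "1/2 :: real"], of "z\<^sup>2 / 2"] by simp
  \<comment> \<open>the tail of the exponential series is dominated termwise by a geometric series of ratio 1/2,
      since 2 * 3 ^ n \<le> (n + 2)! and z \<le> 3/2\<close>
  have term_le: "inverse (fact (n + 2)) * z ^ (n + 2) \<le> z\<^sup>2 / 2 * (1/2) ^ n" for n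
  proof -
    have "(2::nat) * 3 ^ n \<le> fact (n + 2)"
      by (induct n) simp_all
    then have fact_ge: "2 * 3 ^ n \<le> (fact (n + 2) :: real)"
      by (metis (mono_tags) of_nat_fact of_nat_le_iff of_nat_mult of_nat_numeral of_nat_power)
    have "z ^ n \<le> (3/2) ^ n"
      using True assms by (intro power_mono) auto
    have "inverse (fact (n + 2)) * z ^ (n + 2) = z ^ n * z\<^sup>2 / fact (n + 2)"
      by (simp add: power_add divide_inverse mult.commute power2_eq_square)
    also have "\<dots> \<le> (3/2) ^ n * z\<^sup>2 / (2 * 3 ^ n)"
      using fact_ge \<open>z ^ n \<le> (3/2) ^ n\<close> True by (intro frac_le mult_mono) auto
    also have "\<dots> = z\<^sup>2 / 2 * (1/2) ^ n"
      by (simp add: power_divide field_simps)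
    finally show ?thesis .
  qed
  have "(\<Sum>n. inverse (fact (n + 2)) * z ^ (n + 2)) \<le> (\<Sum>n. z\<^sup>2 / 2 * (1/2) ^ n)"
    using term_le summable_ignore_initial_segment[OF summable_exp[of z], of 2]
      sums_summable[OF geometric]
    by (intro suminf_le) auto
  also have "\<dots> = z\<^sup>2"
    using geometric by (rule sums_unique[symmetric])
  finally show ?thesis
    unfolding exp_first_two_terms by simp
next
  case False
  then show ?thesis
    using exp_le_quadratic_of_nonpos[of z] zero_le_power2[of z] by linarith
qed

lemma centered_mgf_le:
  fixes \<pi> y :: "'l \<Rightarrow> real"
  assumes "finite L" "\<And>l. l \<in> L \<Longrightarrow> 0 \<le> \<pi> l" "(\<Sum>l\<in>L. \<pi> l) = 1"
    and "(\<Sum>l\<in>L. \<pi> l * y l) = 0" "\<And>l. l \<in> L \<Longrightarrow> lam * y l \<le> 3/2"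
  shows "(\<Sum>l\<in>L. \<pi> l * exp (lam * y l)) \<le> exp (lam\<^sup>2 * (\<Sum>l\<in>L. \<pi> l * (y l)\<^sup>2))"
proof -
  have "(\<Sum>l\<in>L. \<pi> l * exp (lam * y l)) \<le> (\<Sum>l\<in>L. \<pi> l * (1 + lam * y l + (lam * y l)\<^sup>2))"
    using assms by (intro sum_mono mult_left_mono exp_le_quadratic) auto
  also have "\<dots> = (\<Sum>l\<in>L. \<pi> l) + lam * (\<Sum>l\<in>L. \<pi> l * y l) + lam\<^sup>2 * (\<Sum>l\<in>L. \<pi> l * (y l)\<^sup>2)"
    by (simp add: sum.distrib sum_distrib_left algebra_simps power2_eq_square)
  also have "\<dots> = 1 + lam\<^sup>2 * (\<Sum>l\<in>L. \<pi> l * (y l)\<^sup>2)"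
    using assms by simp
  also have "\<dots> \<le> exp (lam\<^sup>2 * (\<Sum>l\<in>L. \<pi> l * (y l)\<^sup>2))"
    by (rule exp_ge_add_one_self)
  finally show ?thesis .
qed

lemma nonneg_lower_mgf_le:
  fixes \<pi> w :: "'l \<Rightarrow> real"
  assumes "finite L" "\<And>l. l \<in> L \<Longrightarrow> 0 \<le> \<pi> l" "(\<Sum>l\<in>L. \<pi> l) = 1"
    and "\<And>l. l \<in> L \<Longrightarrow> 0 \<le> w l" "0 \<le> lam"
  shows "(\<Sum>l\<in>L. \<pi> l * exp (lam * ((\<Sum>l\<in>L. \<pi> l * w l) - w l)))
    \<le> exp (lam\<^sup>2 * ((\<Sum>l\<in>L. \<pi> l * (w l)\<^sup>2) / 2))"
proof -
  define \<mu> where "\<mu> = (\<Sum>l\<in>L. \<pi> l * w l)"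
  define S where "S = (\<Sum>l\<in>L. \<pi> l * (w l)\<^sup>2)"
  have "(\<Sum>l\<in>L. \<pi> l * exp (lam * (\<mu> - w l)))
      = exp (lam * \<mu>) * (\<Sum>l\<in>L. \<pi> l * exp (- (lam * w l)))"
    by (simp add: sum_distrib_left right_diff_distrib exp_diff exp_minus field_simps)
  also have "\<dots> \<le> exp (lam * \<mu>) * (\<Sum>l\<in>L. \<pi> l * (1 - lam * w l + (lam * w l)\<^sup>2 / 2))"
    using assms exp_le_quadratic_of_nonpos[of "- (lam * w l)" for l]
    by (intro mult_left_mono sum_mono) auto
  also have "(\<Sum>l\<in>L. \<pi> l * (1 - lam * w l + (lam * w l)\<^sup>2 / 2)) = 1 - lam * \<mu> + lam\<^sup>2 * S / 2"
    using assms(3)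
    by (simp add: \<mu>_def S_def algebra_simps power2_eq_square sum.distrib sum_subtractf
        sum_distrib_left sum_divide_distrib)
  also have "exp (lam * \<mu>) * (1 - lam * \<mu> + lam\<^sup>2 * S / 2)
      \<le> exp (lam * \<mu>) * exp (- (lam * \<mu>) + lam\<^sup>2 * S / 2)"
    using exp_ge_add_one_self[of "- (lam * \<mu>) + lam\<^sup>2 * S / 2"] by (intro mult_left_mono) (linarith, simp)
  also have "\<dots> = exp (lam\<^sup>2 * (S / 2))"
    by (simp add: exp_add[symmetric])
  finally show ?thesis
    by (simp add: \<mu>_def S_def)
qed

lemma bounded_mgf_le:
  fixes \<pi> w :: "'l \<Rightarrow> real"
  assumes L: "finite L" and \<pi>: "\<And>l. l \<in> L \<Longrightarrow> 0 \<le> \<pi> l" "(\<Sum>l\<in>L. \<pi> l) = 1"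
    and w: "\<And>l. l \<in> L \<Longrightarrow> 0 \<le> w l \<and> w l \<le> B" and \<sigma>: "\<sigma> = 1 \<or> \<sigma> = -1"
    and "0 \<le> lam" "lam * B \<le> 3/2"
  shows "(\<Sum>l\<in>L. \<pi> l * exp (lam * (\<sigma> * (w l - (\<Sum>l\<in>L. \<pi> l * w l)))))
    \<le> exp (lam\<^sup>2 * (\<Sum>l\<in>L. \<pi> l * (w l)\<^sup>2))"
proof -
  define \<mu> where "\<mu> = (\<Sum>l\<in>L. \<pi> l * w l)"
  have "\<mu> \<le> (\<Sum>l\<in>L. \<pi> l * B)"
    unfolding \<mu>_def using w \<pi> by (intro sum_mono mult_left_mono) auto
  then have "0 \<le> \<mu>" "\<mu> \<le> B"
    using w \<pi> by (auto simp: \<mu>_def sum_distrib_right[symmetric] intro!: sum_nonneg)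
  have "(\<Sum>l\<in>L. \<pi> l * exp (lam * (\<sigma> * (w l - \<mu>))))
      \<le> exp (lam\<^sup>2 * (\<Sum>l\<in>L. \<pi> l * (\<sigma> * (w l - \<mu>))\<^sup>2))"
  proof (rule centered_mgf_le[OF L \<pi>])
    show "(\<Sum>l\<in>L. \<pi> l * (\<sigma> * (w l - \<mu>))) = 0"
      using \<pi>(2) by (simp add: algebra_simps sum_subtractf sum_distrib_left[symmetric]
          sum_distrib_right[symmetric] \<mu>_def)
    fix l assume "l \<in> L"
    have "lam * (\<sigma> * (w l - \<mu>)) \<le> lam * B"
      using \<sigma> w[OF \<open>l \<in> L\<close>] \<open>0 \<le> \<mu>\<close> \<open>\<mu> \<le> B\<close> \<open>0 \<le> lam\<close> by (intro mult_left_mono) auto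
    then show "lam * (\<sigma> * (w l - \<mu>)) \<le> 3/2"
      using \<open>lam * B \<le> 3/2\<close> by linarith
  qed auto
  also have "(\<Sum>l\<in>L. \<pi> l * (\<sigma> * (w l - \<mu>))\<^sup>2) = (\<Sum>l\<in>L. \<pi> l * (w l)\<^sup>2) - \<mu>\<^sup>2"
  proof -
    have sq: "(\<sigma> * (w l - \<mu>))\<^sup>2 = (w l)\<^sup>2 - 2 * \<mu> * w l + \<mu>\<^sup>2" for l
      using \<sigma> by (auto simp: power2_eq_square algebra_simps)
    have "(\<Sum>l\<in>L. \<pi> l * (\<sigma> * (w l - \<mu>))\<^sup>2)
        = (\<Sum>l\<in>L. \<pi> l * (w l)\<^sup>2 - 2 * \<mu> * (\<pi> l * w l) + \<mu>\<^sup>2 * \<pi> l)"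
      unfolding sq by (intro sum.cong) (auto simp: algebra_simps)
    also have "\<dots> = (\<Sum>l\<in>L. \<pi> l * (w l)\<^sup>2) - 2 * \<mu> * \<mu> + \<mu>\<^sup>2 * (\<Sum>l\<in>L. \<pi> l)"
      by (simp add: sum.distrib sum_subtractf sum_distrib_left \<mu>_def)
    finally show ?thesis
      using \<pi>(2) by (simp add: power2_eq_square)
  qed
  also have "exp (lam\<^sup>2 * (\<dots>)) \<le> exp (lam\<^sup>2 * (\<Sum>l\<in>L. \<pi> l * (w l)\<^sup>2))"
    by (simp add: mult_left_mono)
  finally show ?thesis
    by (simp add: \<mu>_def)
qed

lemma Chernoff_optimize_bounded:
  fixes P t V x Lam :: real
  assumes mgf: "\<And>lam. 0 \<le> lam \<Longrightarrow> lam \<le> Lam \<Longrightarrow> P \<le> exp (- lam * t + lam\<^sup>2 * V)"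
    and "0 < Lam" "0 \<le> V" "0 \<le> x" and t: "2 * sqrt (V * x) + x / Lam \<le> t"
  shows "P \<le> exp (- x)"
proof (cases "x = 0")
  case True
  then show ?thesis
    using mgf[of 0] \<open>0 < Lam\<close> by simp
next
  case False
  then have "0 < x"
    using assms by auto
  define s where "s = sqrt (V * x)"
  define d where "d = x / Lam"
  \<comment> \<open>with this choice lam^2 * V \<le> lam * s, so the exponent is at most - lam * (s + d) = - x\<close>
  define lam where "lam = x / (s + d)"
  have "0 \<le> s" "0 < d" "s\<^sup>2 = V * x"
    using assms \<open>0 < x\<close> by (auto simp: s_def d_def)
  have "0 \<le> lam"
    using \<open>0 \<le> s\<close> \<open>0 < d\<close> \<open>0 < x\<close> by (simp add: lam_def)
  have "lam \<le> x / d"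
    unfolding lam_def using \<open>0 \<le> s\<close> \<open>0 < d\<close> \<open>0 < x\<close> by (intro divide_left_mono) auto
  also have "x / d = Lam"
    using \<open>0 < x\<close> \<open>0 < Lam\<close> by (simp add: d_def)
  finally have "lam \<le> Lam" .
  have "lam * (2 * s + d) \<le> lam * t"
    using t \<open>0 \<le> lam\<close> by (simp add: s_def d_def mult_left_mono)
  moreover have "lam\<^sup>2 * V = lam * s * (s / (s + d))"
    using \<open>0 < x\<close> \<open>0 \<le> s\<close> \<open>0 < d\<close> \<open>s\<^sup>2 = V * x\<close> by (simp add: lam_def power2_eq_square field_simps)
  moreover have "lam * s * (s / (s + d)) \<le> lam * s"
    using \<open>0 \<le> lam\<close> \<open>0 \<le> s\<close> \<open>0 < d\<close> by (intro mult_left_le) auto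
  moreover have "lam * (s + d) = x"
    using \<open>0 \<le> s\<close> \<open>0 < d\<close> by (simp add: lam_def)
  ultimately have "- lam * t + lam\<^sup>2 * V \<le> - x"
    by (simp add: ring_distribs)
  then show ?thesis
    using mgf[OF \<open>0 \<le> lam\<close> \<open>lam \<le> Lam\<close>] by (meson exp_le_cancel_iff order_trans)
qed

lemma Chernoff_optimize:
  fixes P t V x :: real
  assumes mgf: "\<And>lam. 0 \<le> lam \<Longrightarrow> P \<le> exp (- lam * t + lam\<^sup>2 * V)"
    and "0 < V" "0 \<le> x" and t: "2 * sqrt (V * x) \<le> t"
  shows "P \<le> exp (- x)"
proof -
  define lam where "lam = sqrt (x / V)"
  have "0 \<le> lam"
    using assms by (simp add: lam_def)
  have "lam * (2 * sqrt (V * x)) = 2 * x"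
    using assms by (simp add: lam_def real_sqrt_mult[symmetric])
  then have "2 * x \<le> lam * t"
    using t \<open>0 \<le> lam\<close> by (metis mult_left_mono)
  moreover have "lam\<^sup>2 * V = x"
    using assms by (simp add: lam_def)
  ultimately have "- lam * t + lam\<^sup>2 * V \<le> - x"
    by linarith
  then show ?thesis
    using mgf[OF \<open>0 \<le> lam\<close>] by (meson exp_le_cancel_iff order_trans)
qed

lemma sqrt_threshold_le_gap:
  fixes p f L s N :: real
  assumes "0 \<le> p" "0 \<le> L" "0 < s" "s \<le> N" "2 * (f + 12 * L / s) < p"
  shows "2 * sqrt (p / (2 * N) * (8 * L)) \<le> p - f"
proof -
  have eq: "p / (2 * N) * (8 * L) = p / 2 * (8 * (L / N))"
    by simp
  have "2 * sqrt (p / 2 * (8 * (L / N))) \<le> p / 2 + 8 * (L / N)"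
    using arith_geo_mean_sqrt[of "p / 2" "8 * (L / N)"] assms by simp
  also have "\<dots> \<le> p / 2 + 8 * (L / s)"
    using assms by (simp add: divide_left_mono)
  also have "\<dots> \<le> p - f"
    using assms by (simp add: field_simps)
  finally show ?thesis
    unfolding eq .
qed

section \<open>Tail bounds for finite product distributions\<close>

(* The probability of Q when the coordinates indexed by I are i.i.d. with weights pi on the finite
   set L, written as a finite sum instead of a product measure. *)
definition prod_prob :: "'i set \<Rightarrow> 'l set \<Rightarrow> ('l \<Rightarrow> real) \<Rightarrow> (('i \<Rightarrow> 'l) \<Rightarrow> bool) \<Rightarrow> real" where
  "prod_prob I L \<pi> Q = (\<Sum>\<phi>\<in>PiE I (\<lambda>_. L). if Q \<phi> then \<Prod>i\<in>I. \<pi> (\<phi> i) else 0)"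

lemma prod_nonneg_PiE:
  fixes \<pi> :: "'l \<Rightarrow> real"
  shows "(\<And>l. l \<in> L \<Longrightarrow> 0 \<le> \<pi> l) \<Longrightarrow> \<phi> \<in> PiE I (\<lambda>_. L) \<Longrightarrow> 0 \<le> (\<Prod>i\<in>I. \<pi> (\<phi> i))"
  by (intro prod_nonneg) (auto simp: PiE_def)

lemma prod_prob_nonneg:
  "(\<And>l. l \<in> L \<Longrightarrow> 0 \<le> \<pi> l) \<Longrightarrow> 0 \<le> prod_prob I L \<pi> Q"
  unfolding prod_prob_def by (intro sum_nonneg) (auto intro: prod_nonneg_PiE)

lemma prod_prob_eq_0:
  "(\<And>\<phi>. \<phi> \<in> PiE I (\<lambda>_. L) \<Longrightarrow> \<not> Q \<phi>) \<Longrightarrow> prod_prob I L \<pi> Q = 0"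
  unfolding prod_prob_def by (intro sum.neutral) auto

lemma prod_prob_mono:
  assumes "\<And>l. l \<in> L \<Longrightarrow> 0 \<le> \<pi> l" and "\<And>\<phi>. \<phi> \<in> PiE I (\<lambda>_. L) \<Longrightarrow> Q \<phi> \<Longrightarrow> Q' \<phi>"
  shows "prod_prob I L \<pi> Q \<le> prod_prob I L \<pi> Q'"
  unfolding prod_prob_def using assms by (intro sum_mono) (auto intro: prod_nonneg_PiE)

lemma prod_prob_disj_le:
  assumes "\<And>l. l \<in> L \<Longrightarrow> 0 \<le> \<pi> l"
  shows "prod_prob I L \<pi> (\<lambda>\<phi>. A \<phi> \<or> B \<phi>) \<le> prod_prob I L \<pi> A + prod_prob I L \<pi> B"
  unfolding prod_prob_def sum.distrib[symmetric] using assms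
  by (intro sum_mono) (auto intro: prod_nonneg_PiE)

lemma prod_prob_Bex_le:
  assumes "finite K" "\<And>l. l \<in> L \<Longrightarrow> 0 \<le> \<pi> l"
  shows "prod_prob I L \<pi> (\<lambda>\<phi>. \<exists>k\<in>K. A k \<phi>) \<le> (\<Sum>k\<in>K. prod_prob I L \<pi> (A k))"
proof -
  have "prod_prob I L \<pi> (\<lambda>\<phi>. \<exists>k\<in>K. A k \<phi>)
      \<le> (\<Sum>\<phi>\<in>PiE I (\<lambda>_. L). \<Sum>k\<in>K. if A k \<phi> then \<Prod>i\<in>I. \<pi> (\<phi> i) else 0)"
    unfolding prod_prob_def
  proof (intro sum_mono)
    fix \<phi> assume \<phi>: "\<phi> \<in> PiE I (\<lambda>_. L)"
    show "(if \<exists>k\<in>K. A k \<phi> then \<Prod>i\<in>I. \<pi> (\<phi> i) else 0)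
        \<le> (\<Sum>k\<in>K. if A k \<phi> then \<Prod>i\<in>I. \<pi> (\<phi> i) else 0)"
    proof (cases "\<exists>k\<in>K. A k \<phi>")
      case True
      then obtain k where "k \<in> K" "A k \<phi>" by blast
      then have "(\<Prod>i\<in>I. \<pi> (\<phi> i)) = (if A k \<phi> then \<Prod>i\<in>I. \<pi> (\<phi> i) else 0)"
        by simp
      also have "\<dots> \<le> (\<Sum>k\<in>K. if A k \<phi> then \<Prod>i\<in>I. \<pi> (\<phi> i) else 0)"
        using assms \<phi> \<open>k \<in> K\<close> by (intro member_le_sum) (auto intro: prod_nonneg_PiE)
      finally show ?thesis
        using True by simp
    qed (use assms \<phi> in \<open>auto intro!: sum_nonneg prod_nonneg_PiE\<close>)
  qed
  also have "\<dots> = (\<Sum>k\<in>K. prod_prob I L \<pi> (A k))"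
    unfolding prod_prob_def by (rule sum.swap)
  finally show ?thesis .
qed

lemma prod_prob_Chernoff:
  fixes \<pi> :: "'l \<Rightarrow> real" and y :: "'i \<Rightarrow> 'l \<Rightarrow> real"
  assumes "finite I" "finite L" "\<And>l. l \<in> L \<Longrightarrow> 0 \<le> \<pi> l" "0 \<le> lam"
  shows "prod_prob I L \<pi> (\<lambda>\<phi>. t \<le> (\<Sum>i\<in>I. y i (\<phi> i)))
    \<le> exp (- lam * t) * (\<Prod>i\<in>I. \<Sum>l\<in>L. \<pi> l * exp (lam * y i l))"
proof -
  have "prod_prob I L \<pi> (\<lambda>\<phi>. t \<le> (\<Sum>i\<in>I. y i (\<phi> i)))
      \<le> (\<Sum>\<phi>\<in>PiE I (\<lambda>_. L). (\<Prod>i\<in>I. \<pi> (\<phi> i)) * exp (lam * ((\<Sum>i\<in>I. y i (\<phi> i)) - t)))"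
    unfolding prod_prob_def
  proof (intro sum_mono)
    fix \<phi> assume "\<phi> \<in> PiE I (\<lambda>_. L)"
    with assms(3) have "0 \<le> (\<Prod>i\<in>I. \<pi> (\<phi> i))"
      by (rule prod_nonneg_PiE)
    moreover have "1 \<le> exp (lam * ((\<Sum>i\<in>I. y i (\<phi> i)) - t))" if "t \<le> (\<Sum>i\<in>I. y i (\<phi> i))"
      using that assms(4) by simp
    ultimately show "(if t \<le> (\<Sum>i\<in>I. y i (\<phi> i)) then \<Prod>i\<in>I. \<pi> (\<phi> i) else 0)
        \<le> (\<Prod>i\<in>I. \<pi> (\<phi> i)) * exp (lam * ((\<Sum>i\<in>I. y i (\<phi> i)) - t))"
      by (auto simp: mult_le_cancel_left1)
  qed
  also have "\<dots> = (\<Sum>\<phi>\<in>PiE I (\<lambda>_. L). exp (- lam * t) * (\<Prod>i\<in>I. \<pi> (\<phi> i) * exp (lam * y i (\<phi> i))))"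
    using assms(1)
    by (simp add: sum_distrib_left right_diff_distrib exp_diff exp_sum prod.distrib
        exp_minus field_simps)
  also have "\<dots> = exp (- lam * t) * (\<Prod>i\<in>I. \<Sum>l\<in>L. \<pi> l * exp (lam * y i l))"
    using prod_sum_PiE[of I "\<lambda>_. L" "\<lambda>i l. \<pi> l * exp (lam * y i l)"] assms(1,2)
    by (simp add: sum_distrib_left)
  finally show ?thesis .
qed

lemma prod_prob_Bernstein:
  fixes \<pi> :: "'l \<Rightarrow> real" and w :: "'i \<Rightarrow> 'l \<Rightarrow> real"
  assumes I: "finite I" and L: "finite L" and \<pi>: "\<And>l. l \<in> L \<Longrightarrow> 0 \<le> \<pi> l" "(\<Sum>l\<in>L. \<pi> l) = 1"
    and "0 < B" and w: "\<And>i l. i \<in> I \<Longrightarrow> l \<in> L \<Longrightarrow> 0 \<le> w i l \<and> w i l \<le> B"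
    and \<sigma>: "\<sigma> = 1 \<or> \<sigma> = -1"
    and V: "(\<Sum>i\<in>I. \<Sum>l\<in>L. \<pi> l * (w i l)\<^sup>2) \<le> V"
    and "0 \<le> x" and "2 * sqrt (V * x) + 2 * B * x / 3 \<le> t"
  shows "prod_prob I L \<pi> (\<lambda>\<phi>. t \<le> (\<Sum>i\<in>I. \<sigma> * (w i (\<phi> i) - (\<Sum>l\<in>L. \<pi> l * w i l)))) \<le> exp (- x)"
proof (rule Chernoff_optimize_bounded)
  have "0 \<le> (\<Sum>i\<in>I. \<Sum>l\<in>L. \<pi> l * (w i l)\<^sup>2)"
    using \<pi> by (intro sum_nonneg mult_nonneg_nonneg) auto
  then show "0 \<le> V"
    using V by linarith
  show "0 < 3 / (2 * B)" "0 \<le> x"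
    using assms by auto
  show "2 * sqrt (V * x) + x / (3 / (2 * B)) \<le> t"
    using assms by (simp add: mult.commute)
  fix lam :: real assume "0 \<le> lam" "lam \<le> 3 / (2 * B)"
  then have "lam * B \<le> 3/2"
    using \<open>0 < B\<close> by (simp add: field_simps)
  let ?\<mu> = "\<lambda>i. \<Sum>l\<in>L. \<pi> l * w i l"
  have "prod_prob I L \<pi> (\<lambda>\<phi>. t \<le> (\<Sum>i\<in>I. \<sigma> * (w i (\<phi> i) - ?\<mu> i)))
      \<le> exp (- lam * t) * (\<Prod>i\<in>I. \<Sum>l\<in>L. \<pi> l * exp (lam * (\<sigma> * (w i l - ?\<mu> i))))"
    by (rule prod_prob_Chernoff[OF I L \<pi>(1) \<open>0 \<le> lam\<close>])
  also have "\<dots> \<le> exp (- lam * t) * (\<Prod>i\<in>I. exp (lam\<^sup>2 * (\<Sum>l\<in>L. \<pi> l * (w i l)\<^sup>2)))"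
    using \<pi> w \<open>0 \<le> lam\<close> \<open>lam * B \<le> 3/2\<close>
    by (intro mult_left_mono prod_mono conjI sum_nonneg bounded_mgf_le[OF L \<pi> _ \<sigma>]) auto
  also have "\<dots> = exp (- lam * t) * exp (lam\<^sup>2 * (\<Sum>i\<in>I. \<Sum>l\<in>L. \<pi> l * (w i l)\<^sup>2))"
    using I by (simp add: exp_sum sum_distrib_left)
  also have "\<dots> \<le> exp (- lam * t) * exp (lam\<^sup>2 * V)"
    using mult_left_mono[OF V, of "lam\<^sup>2"] by simp
  also have "\<dots> = exp (- lam * t + lam\<^sup>2 * V)"
    by (simp only: exp_add)
  finally show "prod_prob I L \<pi> (\<lambda>\<phi>. t \<le> (\<Sum>i\<in>I. \<sigma> * (w i (\<phi> i) - ?\<mu> i)))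
      \<le> exp (- lam * t + lam\<^sup>2 * V)" .
qed

lemma prod_prob_lower_tail:
  fixes \<pi> :: "'l \<Rightarrow> real" and w :: "'i \<Rightarrow> 'l \<Rightarrow> real"
  assumes I: "finite I" and L: "finite L" and \<pi>: "\<And>l. l \<in> L \<Longrightarrow> 0 \<le> \<pi> l" "(\<Sum>l\<in>L. \<pi> l) = 1"
    and w: "\<And>i l. i \<in> I \<Longrightarrow> l \<in> L \<Longrightarrow> 0 \<le> w i l"
    and V: "(\<Sum>i\<in>I. \<Sum>l\<in>L. \<pi> l * (w i l)\<^sup>2) / 2 \<le> V" and "0 < V"
    and "0 \<le> x" and "2 * sqrt (V * x) \<le> t"
  shows "prod_prob I L \<pi> (\<lambda>\<phi>. t \<le> (\<Sum>i\<in>I. (\<Sum>l\<in>L. \<pi> l * w i l) - w i (\<phi> i))) \<le> exp (- x)"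
proof (rule Chernoff_optimize[OF _ \<open>0 < V\<close> \<open>0 \<le> x\<close> \<open>2 * sqrt (V * x) \<le> t\<close>])
  fix lam :: real assume "0 \<le> lam"
  have "prod_prob I L \<pi> (\<lambda>\<phi>. t \<le> (\<Sum>i\<in>I. (\<Sum>l\<in>L. \<pi> l * w i l) - w i (\<phi> i)))
      \<le> exp (- lam * t) * (\<Prod>i\<in>I. \<Sum>l\<in>L. \<pi> l * exp (lam * ((\<Sum>l\<in>L. \<pi> l * w i l) - w i l)))"
    by (rule prod_prob_Chernoff[OF I L \<pi>(1) \<open>0 \<le> lam\<close>])
  also have "\<dots> \<le> exp (- lam * t) * (\<Prod>i\<in>I. exp (lam\<^sup>2 * ((\<Sum>l\<in>L. \<pi> l * (w i l)\<^sup>2) / 2)))"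
    using \<pi> w \<open>0 \<le> lam\<close>
    by (intro mult_left_mono prod_mono conjI sum_nonneg nonneg_lower_mgf_le[OF L]) auto
  also have "\<dots> = exp (- lam * t) * exp (lam\<^sup>2 * ((\<Sum>i\<in>I. \<Sum>l\<in>L. \<pi> l * (w i l)\<^sup>2) / 2))"
    using I by (simp add: exp_sum sum_distrib_left sum_divide_distrib)
  also have "\<dots> \<le> exp (- lam * t) * exp (lam\<^sup>2 * V)"
    using mult_left_mono[OF V, of "lam\<^sup>2"] by simp
  also have "\<dots> = exp (- lam * t + lam\<^sup>2 * V)"
    by (simp only: exp_add)
  finally show "prod_prob I L \<pi> (\<lambda>\<phi>. t \<le> (\<Sum>i\<in>I. (\<Sum>l\<in>L. \<pi> l * w i l) - w i (\<phi> i)))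
      \<le> exp (- lam * t + lam\<^sup>2 * V)" .
qed

lemma measure_label_event:
  fixes M :: "'a measure" and D :: "real measure" and X :: "'i \<Rightarrow> 'a \<Rightarrow> real"
    and lab :: "real \<Rightarrow> 'l"
  assumes "prob_space M" "finite I" "finite L" "E \<in> sets M"
    and X: "\<And>i. i \<in> I \<Longrightarrow> X i \<in> borel_measurable M"
    and lab: "\<And>l. lab -` {l} \<in> sets borel" "\<And>y. lab y \<in> L"
    and indep: "\<And>A. (\<forall>i\<in>I. A i \<in> sets borel) \<Longrightarrow>
       measure M {\<omega>\<in>space M. \<omega> \<in> E \<and> (\<forall>i\<in>I. X i \<omega> \<in> A i)} = measure M E * (\<Prod>i\<in>I. measure D (A i))"
  shows "measure M {\<omega>\<in>space M. \<omega> \<in> E \<and> Q (\<lambda>i\<in>I. lab (X i \<omega>))}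
    = measure M E * prod_prob I L (\<lambda>l. measure D (lab -` {l})) Q"
proof -
  interpret prob_space M by fact
  define R where "R \<phi> = {\<omega>\<in>space M. \<omega> \<in> E \<and> (\<forall>i\<in>I. X i \<omega> \<in> lab -` {\<phi> i})}" for \<phi>
  define S where "S = {\<phi>\<in>PiE I (\<lambda>_. L). Q \<phi>}"
  have "finite S"
    unfolding S_def using assms(2,3) by (auto intro: finite_subset[OF _ finite_PiE[of I "\<lambda>_. L"]])
  have R_sets: "R \<phi> \<in> sets M" for \<phi>
  proof -
    have "{\<omega>\<in>space M. X i \<omega> \<in> lab -` {\<phi> i}} \<in> sets M" if "i \<in> I" for i
      using measurable_sets[OF X[OF that] lab(1)] by (simp add: vimage_def Int_def conj_commute)
    then have "{\<omega>\<in>space M. \<forall>i\<in>I. X i \<omega> \<in> lab -` {\<phi> i}} \<in> sets M"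
      using assms(2) by (intro sets.sets_Collect_finite_All)
    moreover have "R \<phi> = E \<inter> {\<omega>\<in>space M. \<forall>i\<in>I. X i \<omega> \<in> lab -` {\<phi> i}}"
      unfolding R_def by auto
    ultimately show ?thesis
      using \<open>E \<in> sets M\<close> by auto
  qed
  have "{\<omega>\<in>space M. \<omega> \<in> E \<and> Q (\<lambda>i\<in>I. lab (X i \<omega>))} = (\<Union>\<phi>\<in>S. R \<phi>)"
  proof (intro equalityI subsetI)
    fix \<omega> assume "\<omega> \<in> {\<omega>\<in>space M. \<omega> \<in> E \<and> Q (\<lambda>i\<in>I. lab (X i \<omega>))}"
    then have "(\<lambda>i\<in>I. lab (X i \<omega>)) \<in> S" "\<omega> \<in> R (\<lambda>i\<in>I. lab (X i \<omega>))"
      using lab(2) by (auto simp: S_def R_def)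
    then show "\<omega> \<in> (\<Union>\<phi>\<in>S. R \<phi>)" by blast
  next
    fix \<omega> assume "\<omega> \<in> (\<Union>\<phi>\<in>S. R \<phi>)"
    then obtain \<phi> where \<phi>: "\<phi> \<in> S" "\<omega> \<in> R \<phi>" by blast
    then have "(\<lambda>i\<in>I. lab (X i \<omega>)) = \<phi>"
      by (intro ext) (auto simp: S_def R_def PiE_def extensional_def)
    then show "\<omega> \<in> {\<omega>\<in>space M. \<omega> \<in> E \<and> Q (\<lambda>i\<in>I. lab (X i \<omega>))}"
      using \<phi> by (auto simp: S_def R_def)
  qed
  moreover have "disjoint_family_on R S"
    unfolding disjoint_family_on_def S_def R_def
    by (auto simp: PiE_def extensional_def fun_eq_iff) metis
  ultimately have "measure M {\<omega>\<in>space M. \<omega> \<in> E \<and> Q (\<lambda>i\<in>I. lab (X i \<omega>))} = (\<Sum>\<phi>\<in>S. measure M (R \<phi>))"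
    using \<open>finite S\<close> R_sets by (auto intro: finite_measure_finite_Union)
  also have "\<dots> = (\<Sum>\<phi>\<in>S. measure M E * (\<Prod>i\<in>I. measure D (lab -` {\<phi> i})))"
    unfolding R_def using lab(1) by (intro sum.cong refl indep) auto
  also have "\<dots> = measure M E * prod_prob I L (\<lambda>l. measure D (lab -` {l})) Q"
    unfolding S_def prod_prob_def using assms(2,3)
    by (simp add: sum.inter_filter finite_PiE sum_distrib_left[symmetric])
  finally show ?thesis .
qed

section \<open>The grid and its bins\<close>

lemma bgrid_less: "0 < T \<Longrightarrow> i < i' \<Longrightarrow> bgrid T i < bgrid T i'"
  by (simp add: bgrid_def divide_strict_right_mono)

lemma bgrid_mono: "0 < T \<Longrightarrow> i \<le> i' \<Longrightarrow> bgrid T i \<le> bgrid T i'"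
  by (simp add: bgrid_def divide_right_mono)

lemma bin_le_bgrid: "1 \<le> i \<Longrightarrow> y \<in> bin T i \<Longrightarrow> y \<le> bgrid T i"
  by (auto simp: bin_def bgrid_def split: if_splits)

lemma bgrid_less_bin: "i \<noteq> 1 \<Longrightarrow> y \<in> bin T i \<Longrightarrow> bgrid T (i - 1) < y"
  by (simp add: bin_def)

lemma bin_disjoint:
  assumes "0 < T" "1 \<le> i" "1 \<le> i'" "y \<in> bin T i" "y \<in> bin T i'"
  shows "i = i'"
proof -
  have False if "1 \<le> a" "a < a'" "y \<in> bin T a" "y \<in> bin T a'" for a a'
  proof -
    have "y \<le> bgrid T a"
      using that by (intro bin_le_bgrid)
    also have "\<dots> \<le> bgrid T (a' - 1)"
      using that \<open>0 < T\<close> by (intro bgrid_mono) auto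
    also have "\<dots> < y"
      using that by (intro bgrid_less_bin) auto
    finally show False ..
  qed
  then show ?thesis
    using assms by (metis linorder_neqE_nat)
qed

lemma Jnum_pos:
  assumes "0 < T"
  shows "1 \<le> Jnum T"
proof -
  have "0 < sqrt (real T)"
    using assms by simp
  then show ?thesis
    unfolding Jnum_def by linarith
qed

lemma Jnum_le:
  assumes "0 < T"
  shows "Jnum T \<le> T"
proof -
  from assms have "sqrt (real T) * 1 \<le> sqrt (real T) * sqrt (real T)"
    by (intro mult_left_mono) auto
  then show ?thesis
    by (simp add: Jnum_def)
qed

lemma Jnum_sq_le:
  assumes "0 < T"
  shows "Jnum T ^ 2 \<le> 2 * T"
proof -
  define J where "J = Jnum T"
  have "1 \<le> J"
    using Jnum_pos[OF assms] by (simp add: J_def)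
  have "real J = of_int \<lceil>sqrt (real T)\<rceil>"
    using assms by (simp add: J_def Jnum_def)
  then have "real J - 1 < sqrt (real T)"
    using ceiling_correct[of "sqrt (real T)"] by linarith
  then have "(real J - 1)\<^sup>2 < (sqrt (real T))\<^sup>2"
    using \<open>1 \<le> J\<close> by (intro power_strict_mono) auto
  then have "real ((J - 1)\<^sup>2) < real T"
    using \<open>1 \<le> J\<close> by (simp add: of_nat_diff)
  then have below: "(J - 1)\<^sup>2 + 1 \<le> T"
    by linarith
  have "(2 * (J - 1))\<^sup>2 \<le> 4 * (T - 1)"
    using below by (simp add: power_mult_distrib)
  also have "\<dots> \<le> T\<^sup>2"
  proof (cases T)
    case (Suc n)
    then show ?thesis
      by (cases n) (auto simp: power2_eq_square algebra_simps)
  qed simp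
  finally have "2 * (J - 1) \<le> T"
    by (rule power2_le_imp_le) simp
  moreover have "J\<^sup>2 = (J - 1)\<^sup>2 + 2 * (J - 1) + 1"
    using \<open>1 \<le> J\<close> by (cases J) (auto simp: power2_eq_square)
  ultimately show ?thesis
    using below by (simp add: J_def)
qed

lemma le_Jnum_imp_le_sqrt:
  assumes "0 < T" "j \<le> Jnum T"
  shows "real j \<le> sqrt 2 * sqrt (real T)"
proof (rule power2_le_imp_le)
  have "(real j)\<^sup>2 \<le> real (Jnum T ^ 2)"
    using assms(2) by (simp add: power_mono)
  also have "\<dots> \<le> 2 * real T"
    using Jnum_sq_le[OF assms(1)] by linarith
  finally show "(real j)\<^sup>2 \<le> (sqrt 2 * sqrt (real T))\<^sup>2"
    by (simp add: power_mult_distrib)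
qed simp

lemma Jnum_exp_le:
  assumes "2 \<le> T"
  shows "3 * real (Jnum T) * exp (- (8 * ln (real T))) \<le> 1 / real T ^ 3"
proof -
  have "exp (8 * ln (real T)) = real T ^ 8"
    using exp_of_nat_mult[of 8 "ln (real T)"] assms by simp
  then have "exp (- (8 * ln (real T))) = 1 / real T ^ 8"
    by (simp add: exp_minus inverse_eq_divide)
  moreover have "3 * real (Jnum T) \<le> real T ^ 5"
  proof -
    have "3 * real (Jnum T) \<le> 3 * real T"
      using Jnum_le[of T] assms by simp
    also have "\<dots> \<le> 2 ^ 4 * real T"
      by simp
    also have "\<dots> \<le> real T ^ 4 * real T"
      using assms by (intro mult_right_mono power_mono) auto
    finally show ?thesis
      by (simp add: power_Suc2[symmetric] numeral_eq_Suc)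
  qed
  ultimately have "3 * real (Jnum T) * exp (- (8 * ln (real T))) \<le> real T ^ 5 / real T ^ 8"
    by (simp add: divide_right_mono)
  also have "\<dots> = 1 / real T ^ 3"
    using assms by (simp add: field_simps flip: power_add)
  finally show ?thesis .
qed

locale grid_bins =
  fixes T :: nat and D :: "real measure"
  assumes T_ge_2: "2 \<le> T"
    and prob_space_D: "prob_space D" and sets_D: "sets D = sets borel"
    and D_unit_interval: "emeasure D {0..1} = 1"
begin

sublocale D: real_distribution D
  using prob_space_D sets_D by (simp add: real_distribution_def real_distribution_axioms_def)

abbreviation J :: nat where
  "J \<equiv> Jnum T"

lemma measure_D_UNIV: "measure D UNIV = 1"
  using D.prob_space by simp

lemma T_pos: "0 < T"
  using T_ge_2 by simp

lemma sqrt_T_pos: "0 < sqrt (real T)"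
  using T_ge_2 by simp

lemma ln_T_pos: "0 < ln (real T)"
  using T_ge_2 by simp

(* Label 0 collects the values outside every bin, i.e. outside [0, b^J]. *)
definition bin_index :: "real \<Rightarrow> nat" where
  "bin_index y = (if \<exists>i\<in>{1..J}. y \<in> bin T i then THE i. i \<in> {1..J} \<and> y \<in> bin T i else 0)"

definition bin_prob :: "nat \<Rightarrow> real" where
  "bin_prob l = measure D (bin_index -` {l})"

lemma bin_index_eq_iff:
  assumes "i \<in> {1..J}"
  shows "bin_index y = i \<longleftrightarrow> y \<in> bin T i"
proof -
  have "(THE i. i \<in> {1..J} \<and> y \<in> bin T i) = k" if "k \<in> {1..J}" "y \<in> bin T k" for k
    using that bin_disjoint[OF T_pos] by (intro the_equality) auto
  then show ?thesis
    using assms unfolding bin_index_def by auto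
qed

lemma bin_index_range: "bin_index y \<in> {0..J}"
proof (cases "\<exists>i\<in>{1..J}. y \<in> bin T i")
  case True
  then obtain k where "k \<in> {1..J}" "y \<in> bin T k" by blast
  then show ?thesis
    using bin_index_eq_iff[of k y] by auto
qed (auto simp: bin_index_def)

lemma bin_index_vimage_sets: "bin_index -` {l} \<in> sets borel"
proof -
  consider "l \<in> {1..J}" | "l = 0" | "l \<notin> {0..J}" by fastforce
  then show ?thesis
  proof cases
    case 1
    then have "bin_index -` {l} = bin T l"
      using bin_index_eq_iff by auto
    then show ?thesis
      by (simp add: bin_def)
  next
    case 2
    have "bin_index y = 0 \<longleftrightarrow> (\<forall>i\<in>{1..J}. y \<notin> bin T i)" for y
    proof
      assume "bin_index y = 0"
      then show "\<forall>i\<in>{1..J}. y \<notin> bin T i"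
        using bin_index_eq_iff by (metis not_one_le_zero atLeastAtMost_iff)
    qed (auto simp: bin_index_def)
    then have "bin_index -` {l} = - (\<Union>i\<in>{1..J}. bin T i)"
      using 2 by auto
    moreover have "(\<Union>i\<in>{1..J}. bin T i) \<in> sets borel"
      by (auto simp: bin_def)
    ultimately show ?thesis
      by (metis borel_comp)
  next
    case 3
    then have "bin_index -` {l} = {}"
      using bin_index_range by blast
    then show ?thesis by simp
  qed
qed

lemma bin_prob_nonneg: "0 \<le> bin_prob l"
  by (simp add: bin_prob_def)

lemma bin_prob_eq_measure_bin: "k \<in> {1..J} \<Longrightarrow> bin_prob k = measure D (bin T k)"
  unfolding bin_prob_def using bin_index_eq_iff by (metis set_eq_iff vimage_singleton_eq)

lemma sum_bin_prob: "(\<Sum>l\<in>{0..J}. bin_prob l) = 1"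
proof -
  have "(\<Sum>l\<in>{0..J}. bin_prob l) = measure D (\<Union>l\<in>{0..J}. bin_index -` {l})"
    unfolding bin_prob_def using bin_index_vimage_sets
    by (intro D.finite_measure_finite_Union[symmetric]) (auto simp: disjoint_family_on_def)
  also have "(\<Union>l\<in>{0..J}. bin_index -` {l}) = UNIV"
    using bin_index_range by auto
  finally show ?thesis
    using measure_D_UNIV by simp
qed

lemma measure_D_negative: "measure D {..<0} = 0"
proof -
  have "measure D {..<0} \<le> measure D (UNIV - {0..1})"
    by (intro D.finite_measure_mono) auto
  also have "\<dots> = 1 - measure D {0..1}"
    using D.prob_compl[of "{0..1}"] by simp
  also have "measure D {0..1} = 1"
    using D_unit_interval by (simp add: measure_def)
  finally show ?thesis
    using measure_nonneg[of D "{..<0}"] by simp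
qed

lemma cdf_bgrid_eq: "j \<in> {1..J} \<Longrightarrow> cdf D (bgrid T j) = (\<Sum>i=1..j. bin_prob i)"
proof (induction j)
  case (Suc j)
  show ?case
  proof (cases "j = 0")
    case True
    have "cdf D 0 = measure D ({..<0} \<union> {0})"
      unfolding cdf_def by (simp add: ivl_disj_un(2)[symmetric] Un_commute)
    also have "\<dots> = measure D {0}"
      using measure_D_negative by (subst D.finite_measure_Union) auto
    also have "\<dots> = bin_prob 1"
      using bin_prob_eq_measure_bin[of 1] Suc.prems True by (simp add: bin_def)
    finally show ?thesis
      using True by (simp add: bgrid_def)
  next
    case False
    have "cdf D (bgrid T (Suc j)) - cdf D (bgrid T j) = measure D {bgrid T j<..bgrid T (Suc j)}"
      using T_pos by (intro D.cdf_diff_eq bgrid_less) simp_all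
    also have "\<dots> = bin_prob (Suc j)"
      using bin_prob_eq_measure_bin[of "Suc j"] Suc.prems False by (simp add: bin_def)
    finally show ?thesis
      using Suc False by simp
  qed
qed simp

end

section \<open>Reduction to bid patterns and bin labels\<close>

locale cdf_estimation = grid_bins T D
  for T :: nat and D :: "real measure" +
  fixes M :: "'a measure" and T0 :: nat and \<Phi> :: "'i set"
    and b m :: "'i \<Rightarrow> 'a \<Rightarrow> real" and m' :: "nat \<Rightarrow> 'a \<Rightarrow> real"
  assumes prob_space_M: "prob_space M"
    and finite_\<Phi>: "finite \<Phi>"
    and T0_ge: "nat \<lceil>sqrt (real T)\<rceil> \<le> T0"
    and b_measurable: "\<And>\<tau>. \<tau> \<in> \<Phi> \<Longrightarrow> b \<tau> \<in> borel_measurable M"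
    and m_measurable: "\<And>\<tau>. \<tau> \<in> \<Phi> \<Longrightarrow> m \<tau> \<in> borel_measurable M"
    and m'_measurable: "\<And>s. s \<in> {1..T0} \<Longrightarrow> m' s \<in> borel_measurable M"
    and indep: "\<And>B A A'. B \<in> sets (PiM \<Phi> (\<lambda>_. borel)) \<Longrightarrow>
        (\<forall>\<tau>\<in>\<Phi>. A \<tau> \<in> sets borel) \<Longrightarrow> (\<forall>s\<in>{1..T0}. A' s \<in> sets borel) \<Longrightarrow>
        measure M {\<omega> \<in> space M. (\<lambda>\<tau>\<in>\<Phi>. b \<tau> \<omega>) \<in> B \<and> (\<forall>\<tau>\<in>\<Phi>. m \<tau> \<omega> \<in> A \<tau>)
                                  \<and> (\<forall>s\<in>{1..T0}. m' s \<omega> \<in> A' s)}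
        = measure M {\<omega> \<in> space M. (\<lambda>\<tau>\<in>\<Phi>. b \<tau> \<omega>) \<in> B}
          * (\<Prod>\<tau>\<in>\<Phi>. measure D (A \<tau>)) * (\<Prod>s\<in>{1..T0}. measure D (A' s))"
begin

sublocale M: prob_space M
  by (rule prob_space_M)

(* The estimators depend on the bids only through their pattern, which takes finitely many values,
   and on the HOBs only through their bin labels. *)
definition pattern :: "('i \<Rightarrow> real) \<Rightarrow> 'i \<Rightarrow> nat set" where
  "pattern \<beta> = (\<lambda>\<tau>\<in>\<Phi>. {i\<in>{1..J}. bgrid T i \<le> \<beta> \<tau>})"

definition labels :: "'a \<Rightarrow> 'i \<Rightarrow> nat" where
  "labels \<omega> = (\<lambda>\<tau>\<in>\<Phi>. bin_index (m \<tau> \<omega>))"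

definition labels0 :: "'a \<Rightarrow> nat \<Rightarrow> nat" where
  "labels0 \<omega> = (\<lambda>s\<in>{1..T0}. bin_index (m' s \<omega>))"

definition pcount :: "('i \<Rightarrow> nat set) \<Rightarrow> nat \<Rightarrow> nat" where
  "pcount P i = card {\<tau>\<in>\<Phi>. i \<in> P \<tau>}"

(* Gest P phi j is hat G(b^j) written as a sum over tau: a HOB with label l contributes 1/n^l to
   hat p^l if its bid is at least b^l. *)
definition weight :: "('i \<Rightarrow> nat set) \<Rightarrow> nat \<Rightarrow> 'i \<Rightarrow> nat \<Rightarrow> real" where
  "weight P j \<tau> l = (if l \<in> {1..j} \<and> l \<in> P \<tau> then 1 / real (pcount P l) else 0)"

definition Gest :: "('i \<Rightarrow> nat set) \<Rightarrow> ('i \<Rightarrow> nat) \<Rightarrow> nat \<Rightarrow> real" where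
  "Gest P \<phi> j = (\<Sum>\<tau>\<in>\<Phi>. weight P j \<tau> (\<phi> \<tau>))"

definition freq0 :: "(nat \<Rightarrow> nat) \<Rightarrow> nat \<Rightarrow> real" where
  "freq0 \<phi>' k = (\<Sum>s\<in>{1..T0}. if \<phi>' s = k then 1 / real T0 else 0)"

definition width_sum :: "('i \<Rightarrow> nat set) \<Rightarrow> (nat \<Rightarrow> nat) \<Rightarrow> nat \<Rightarrow> real" where
  "width_sum P \<phi>' j = (\<Sum>k=1..j. 2 * ln (real T) / real (pcount P k)
     * (freq0 \<phi>' k + 12 * ln (real T) / sqrt (real T)))"

definition width :: "('i \<Rightarrow> nat set) \<Rightarrow> (nat \<Rightarrow> nat) \<Rightarrow> nat \<Rightarrow> ereal" where
  "width P \<phi>' j = (if \<exists>k\<in>{1..j}. pcount P k = 0 then \<infinity>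
     else ereal (8 * sqrt (width_sum P \<phi>' j) + 8 * ln (real T) / real (pcount P j)))"

definition good :: "('i \<Rightarrow> nat set) \<Rightarrow> ('i \<Rightarrow> nat) \<Rightarrow> (nat \<Rightarrow> nat) \<Rightarrow> bool" where
  "good P \<phi> \<phi>' \<longleftrightarrow> (\<forall>j\<in>{1..J}.
     ereal \<bar>cdf D (bgrid T j) - Gest P \<phi> j\<bar> \<le> width P \<phi>' j \<and>
     ereal (1 / sqrt (real T) * \<bar>\<Sum>i=1..j. cdf D (bgrid T i) - Gest P \<phi> i\<bar>) \<le> width P \<phi>' j)"

lemma ncount_eq_pcount: "i \<in> {1..J} \<Longrightarrow> ncount T \<Phi> \<beta> i = pcount (pattern \<beta>) i"
  unfolding ncount_def pcount_def pattern_def by (intro arg_cong[where f = card]) auto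

lemma phat_eq:
  assumes "i \<in> {1..J}"
  shows "phat T \<Phi> \<beta> hob i
    = (\<Sum>\<tau>\<in>\<Phi>. if i \<in> pattern \<beta> \<tau> \<and> bin_index (hob \<tau>) = i then 1 / real (pcount (pattern \<beta>) i) else 0)"
proof -
  have "phat T \<Phi> \<beta> hob i
      = (\<Sum>\<tau>\<in>\<Phi>. if \<beta> \<tau> \<ge> bgrid T i \<and> hob \<tau> \<in> bin T i then 1 else 0) / real (pcount (pattern \<beta>) i)"
    unfolding phat_def using ncount_eq_pcount[OF assms] by simp
  also have "\<dots> = (\<Sum>\<tau>\<in>\<Phi>. if i \<in> pattern \<beta> \<tau> \<and> bin_index (hob \<tau>) = i then 1 / real (pcount (pattern \<beta>) i) else 0)"
    unfolding sum_divide_distrib using assms bin_index_eq_iff[OF assms]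
    by (intro sum.cong refl) (auto simp: pattern_def)
  finally show ?thesis .
qed

lemma Ghat_eq_Gest:
  assumes "j \<le> J"
  shows "Ghat T \<Phi> \<beta> hob j = Gest (pattern \<beta>) (\<lambda>\<tau>\<in>\<Phi>. bin_index (hob \<tau>)) j"
proof -
  let ?c = "\<lambda>i. 1 / real (pcount (pattern \<beta>) i)"
  have "Ghat T \<Phi> \<beta> hob j
      = (\<Sum>i=1..j. \<Sum>\<tau>\<in>\<Phi>. if i \<in> pattern \<beta> \<tau> \<and> bin_index (hob \<tau>) = i then ?c i else 0)"
    unfolding Ghat_def using assms by (intro sum.cong refl phat_eq) auto
  also have "\<dots> = (\<Sum>\<tau>\<in>\<Phi>. \<Sum>i=1..j. if i = bin_index (hob \<tau>) then (if i \<in> pattern \<beta> \<tau> then ?c i else 0) else 0)"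
    by (subst sum.swap) (intro sum.cong refl, auto)
  also have "\<dots> = Gest (pattern \<beta>) (\<lambda>\<tau>\<in>\<Phi>. bin_index (hob \<tau>)) j"
    unfolding Gest_def by (intro sum.cong refl) (auto simp: sum.delta weight_def)
  finally show ?thesis .
qed

lemma phat0_eq_freq0:
  assumes "k \<in> {1..J}"
  shows "phat0 T T0 hob' k = freq0 (\<lambda>s\<in>{1..T0}. bin_index (hob' s)) k"
  unfolding phat0_def freq0_def sum_distrib_left
  by (intro sum.cong refl) (auto simp: indicator_def bin_index_eq_iff[OF assms])

lemma ubound_eq_width:
  assumes "j \<in> {1..J}"
  shows "ubound T T0 \<Phi> \<beta> hob' j = width (pattern \<beta>) (\<lambda>s\<in>{1..T0}. bin_index (hob' s)) j"
proof -
  have "ncount T \<Phi> \<beta> k = pcount (pattern \<beta>) k" "phat0 T T0 hob' k = freq0 (\<lambda>s\<in>{1..T0}. bin_index (hob' s)) k"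
    if "k \<in> {1..j}" for k
    using that assms ncount_eq_pcount phat0_eq_freq0 by auto
  moreover from this have "(\<Sum>k=1..j. 2 * ln (real T) / real (ncount T \<Phi> \<beta> k)
        * (phat0 T T0 hob' k + 12 * ln (real T) / sqrt (real T)))
      = width_sum (pattern \<beta>) (\<lambda>s\<in>{1..T0}. bin_index (hob' s)) j"
    unfolding width_sum_def by (intro sum.cong) auto
  ultimately show ?thesis
    using assms unfolding ubound_def width_def by auto
qed

lemma event_eq_good:
  "{\<omega> \<in> space M. \<forall>j\<in>{1..J}.
      ereal \<bar>cdf D (bgrid T j) - Ghat T \<Phi> (\<lambda>\<tau>. b \<tau> \<omega>) (\<lambda>\<tau>. m \<tau> \<omega>) j\<bar>
        \<le> ubound T T0 \<Phi> (\<lambda>\<tau>. b \<tau> \<omega>) (\<lambda>s. m' s \<omega>) j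
      \<and> ereal ((1 / sqrt (real T)) * \<bar>\<Sum>i=1..j. cdf D (bgrid T i) - Ghat T \<Phi> (\<lambda>\<tau>. b \<tau> \<omega>) (\<lambda>\<tau>. m \<tau> \<omega>) i\<bar>)
        \<le> ubound T T0 \<Phi> (\<lambda>\<tau>. b \<tau> \<omega>) (\<lambda>s. m' s \<omega>) j}
   = {\<omega> \<in> space M. good (pattern (\<lambda>\<tau>. b \<tau> \<omega>)) (labels \<omega>) (labels0 \<omega>)}"
proof -
  have "(\<Sum>i=1..j. cdf D (bgrid T i) - Ghat T \<Phi> \<beta> hob i)
      = (\<Sum>i=1..j. cdf D (bgrid T i) - Gest (pattern \<beta>) (\<lambda>\<tau>\<in>\<Phi>. bin_index (hob \<tau>)) i)"
    if "j \<in> {1..J}" for j \<beta> hob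
    using that Ghat_eq_Gest by (intro sum.cong refl) auto
  then show ?thesis
    unfolding good_def labels_def labels0_def using Ghat_eq_Gest ubound_eq_width
    by (intro Collect_cong conj_cong refl) auto
qed

definition patterns :: "('i \<Rightarrow> nat set) set" where
  "patterns = PiE \<Phi> (\<lambda>_. Pow {1..J})"

definition pattern_event :: "('i \<Rightarrow> nat set) \<Rightarrow> 'a set" where
  "pattern_event P = {\<omega>\<in>space M. pattern (\<lambda>\<tau>. b \<tau> \<omega>) = P}"

lemma finite_patterns: "finite patterns"
  unfolding patterns_def using finite_\<Phi> by (intro finite_PiE) auto

lemma pattern_in_patterns: "pattern \<beta> \<in> patterns"
  unfolding patterns_def pattern_def by auto

lemma pattern_restrict: "pattern (\<lambda>\<tau>\<in>\<Phi>. \<beta> \<tau>) = pattern \<beta>"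
  unfolding pattern_def by (intro restrict_ext) auto

lemma pattern_eq_iff:
  assumes "P \<in> patterns"
  shows "pattern \<beta> = P \<longleftrightarrow> (\<forall>\<tau>\<in>\<Phi>. \<forall>i\<in>{1..J}. bgrid T i \<le> \<beta> \<tau> \<longleftrightarrow> i \<in> P \<tau>)"
proof
  assume H: "\<forall>\<tau>\<in>\<Phi>. \<forall>i\<in>{1..J}. bgrid T i \<le> \<beta> \<tau> \<longleftrightarrow> i \<in> P \<tau>"
  have "pattern \<beta> \<tau> = P \<tau>" for \<tau>
  proof (cases "\<tau> \<in> \<Phi>")
    case True
    then have "pattern \<beta> \<tau> = {i\<in>{1..J}. i \<in> P \<tau>}"
      using H by (auto simp: pattern_def)
    also have "\<dots> = P \<tau>"
      using PiE_mem[OF assms[unfolded patterns_def] True] by auto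
    finally show ?thesis .
  next
    case False
    then show ?thesis
      using assms by (auto simp: pattern_def patterns_def PiE_def extensional_def)
  qed
  then show "pattern \<beta> = P" ..
qed (auto simp: pattern_def)

lemma sets_pattern_vimage:
  "{\<beta> \<in> space (PiM \<Phi> (\<lambda>_. borel)). pattern \<beta> = P} \<in> sets (PiM \<Phi> (\<lambda>_. borel))"
proof (cases "P \<in> patterns")
  case True
  have "{\<beta> \<in> space (PiM \<Phi> (\<lambda>_. borel)). bgrid T i \<le> \<beta> \<tau> \<longleftrightarrow> i \<in> P \<tau>} \<in> sets (PiM \<Phi> (\<lambda>_. borel))"
    if "\<tau> \<in> \<Phi>" for \<tau> i
  proof -
    have "(\<lambda>\<beta>. \<beta> \<tau>) \<in> borel_measurable (PiM \<Phi> (\<lambda>_. borel))"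
      using that by (rule measurable_component_singleton)
    from measurable_sets[OF this, of "{bgrid T i..}"] measurable_sets[OF this, of "{..<bgrid T i}"]
    show ?thesis
      by (cases "i \<in> P \<tau>") (auto simp: vimage_def Int_def conj_commute not_le)
  qed
  then have "{\<beta> \<in> space (PiM \<Phi> (\<lambda>_. borel)). \<forall>\<tau>\<in>\<Phi>. \<forall>i\<in>{1..J}. bgrid T i \<le> \<beta> \<tau> \<longleftrightarrow> i \<in> P \<tau>}
      \<in> sets (PiM \<Phi> (\<lambda>_. borel))"
    using finite_\<Phi> by (intro sets.sets_Collect_finite_All) auto
  then show ?thesis
    using pattern_eq_iff[OF True] by simp
next
  case False
  then show ?thesis
    using pattern_in_patterns by (metis (mono_tags, lifting) Collect_empty_eq sets.empty_sets)
qed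

lemma sets_pattern_event: "pattern_event P \<in> sets M"
proof -
  have "(\<lambda>\<omega>. \<lambda>\<tau>\<in>\<Phi>. b \<tau> \<omega>) \<in> measurable M (PiM \<Phi> (\<lambda>_. borel))"
    using b_measurable by (intro measurable_restrict) auto
  from measurable_sets[OF this sets_pattern_vimage[of P]]
  show ?thesis
    unfolding pattern_event_def by (simp add: pattern_restrict vimage_def Int_def conj_commute space_PiM)
qed

lemma sets_label_event:
  "{\<omega>\<in>space M. R (pattern (\<lambda>\<tau>. b \<tau> \<omega>)) (labels \<omega>) (labels0 \<omega>)} \<in> sets M"
proof -
  define Z where "Z = patterns \<times> PiE \<Phi> (\<lambda>_. {0..J}) \<times> PiE {1..T0} (\<lambda>_. {0..J})"
  define F where "F z = pattern_event (fst z)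
      \<inter> {\<omega>\<in>space M. \<forall>\<tau>\<in>\<Phi>. bin_index (m \<tau> \<omega>) = fst (snd z) \<tau>}
      \<inter> {\<omega>\<in>space M. \<forall>s\<in>{1..T0}. bin_index (m' s \<omega>) = snd (snd z) s}" for z
  have "finite Z"
    unfolding Z_def using finite_patterns finite_\<Phi> by (intro finite_cartesian_product finite_PiE) auto
  have "{\<omega>\<in>space M. bin_index (f \<omega>) = l} \<in> sets M" if "f \<in> borel_measurable M" for f l
    using measurable_sets[OF that bin_index_vimage_sets] by (simp add: vimage_def Int_def conj_commute)
  then have "F z \<in> sets M" for z
    unfolding F_def using finite_\<Phi> m_measurable m'_measurable
    by (intro sets.Int sets_pattern_event sets.sets_Collect_finite_All) auto
  moreover have "{\<omega>\<in>space M. R (pattern (\<lambda>\<tau>. b \<tau> \<omega>)) (labels \<omega>) (labels0 \<omega>)}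
      = (\<Union>z\<in>{z\<in>Z. R (fst z) (fst (snd z)) (snd (snd z))}. F z)"
  proof (intro equalityI subsetI)
    fix \<omega> assume \<omega>: "\<omega> \<in> {\<omega>\<in>space M. R (pattern (\<lambda>\<tau>. b \<tau> \<omega>)) (labels \<omega>) (labels0 \<omega>)}"
    then have "(pattern (\<lambda>\<tau>. b \<tau> \<omega>), labels \<omega>, labels0 \<omega>) \<in> {z\<in>Z. R (fst z) (fst (snd z)) (snd (snd z))}"
      using pattern_in_patterns bin_index_range by (auto simp: Z_def labels_def labels0_def)
    moreover have "\<omega> \<in> F (pattern (\<lambda>\<tau>. b \<tau> \<omega>), labels \<omega>, labels0 \<omega>)"
      using \<omega> by (auto simp: F_def pattern_event_def labels_def labels0_def)
    ultimately show "\<omega> \<in> (\<Union>z\<in>{z\<in>Z. R (fst z) (fst (snd z)) (snd (snd z))}. F z)"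
      by blast
  next
    fix \<omega> assume "\<omega> \<in> (\<Union>z\<in>{z\<in>Z. R (fst z) (fst (snd z)) (snd (snd z))}. F z)"
    then obtain P \<phi> \<phi>' where z: "(P, \<phi>, \<phi>') \<in> Z" "R P \<phi> \<phi>'" "\<omega> \<in> F (P, \<phi>, \<phi>')"
      by auto
    then have "pattern (\<lambda>\<tau>. b \<tau> \<omega>) = P" "labels \<omega> = \<phi>" "labels0 \<omega> = \<phi>'"
      by (auto simp: Z_def F_def pattern_event_def labels_def labels0_def PiE_def extensional_def fun_eq_iff)
    then show "\<omega> \<in> {\<omega>\<in>space M. R (pattern (\<lambda>\<tau>. b \<tau> \<omega>)) (labels \<omega>) (labels0 \<omega>)}"
      using z by (auto simp: F_def)
  qed
  ultimately show ?thesis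
    using \<open>finite Z\<close> by auto
qed

lemma bin_prob_eq: "(\<lambda>l. measure D (bin_index -` {l})) = bin_prob"
  by (simp add: bin_prob_def fun_eq_iff)

lemma measure_labels_given_pattern:
  "measure M {\<omega>\<in>space M. \<omega> \<in> pattern_event P \<and> Q (labels \<omega>)}
    = measure M (pattern_event P) * prod_prob \<Phi> {0..J} bin_prob Q"
  unfolding labels_def bin_prob_eq[symmetric]
proof (rule measure_label_event[OF prob_space_M finite_\<Phi> _ sets_pattern_event m_measurable
      bin_index_vimage_sets bin_index_range])
  fix A :: "'i \<Rightarrow> real set" assume "\<forall>\<tau>\<in>\<Phi>. A \<tau> \<in> sets borel"
  then have "measure M {\<omega>\<in>space M. (\<lambda>\<tau>\<in>\<Phi>. b \<tau> \<omega>) \<in> {\<beta> \<in> space (PiM \<Phi> (\<lambda>_. borel)). pattern \<beta> = P}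
        \<and> (\<forall>\<tau>\<in>\<Phi>. m \<tau> \<omega> \<in> A \<tau>) \<and> (\<forall>s\<in>{1..T0}. m' s \<omega> \<in> UNIV)}
      = measure M {\<omega>\<in>space M. (\<lambda>\<tau>\<in>\<Phi>. b \<tau> \<omega>) \<in> {\<beta> \<in> space (PiM \<Phi> (\<lambda>_. borel)). pattern \<beta> = P}}
        * (\<Prod>\<tau>\<in>\<Phi>. measure D (A \<tau>)) * (\<Prod>s\<in>{1..T0}. measure D UNIV)"
    by (intro indep sets_pattern_vimage) auto
  moreover have "{\<omega>\<in>space M. \<omega> \<in> pattern_event P \<and> (\<forall>\<tau>\<in>\<Phi>. m \<tau> \<omega> \<in> A \<tau>)}
      = {\<omega>\<in>space M. pattern (\<lambda>\<tau>. b \<tau> \<omega>) = P \<and> (\<forall>\<tau>\<in>\<Phi>. m \<tau> \<omega> \<in> A \<tau>)}"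
    by (auto simp: pattern_event_def)
  ultimately show "measure M {\<omega>\<in>space M. \<omega> \<in> pattern_event P \<and> (\<forall>\<tau>\<in>\<Phi>. m \<tau> \<omega> \<in> A \<tau>)}
      = measure M (pattern_event P) * (\<Prod>\<tau>\<in>\<Phi>. measure D (A \<tau>))"
    by (simp add: pattern_event_def pattern_restrict space_PiM measure_D_UNIV)
qed simp

lemma measure_pattern_label_event_le:
  assumes "\<And>\<beta>. prod_prob \<Phi> {0..J} bin_prob (Q (pattern \<beta>)) \<le> \<delta>"
  shows "measure M {\<omega>\<in>space M. Q (pattern (\<lambda>\<tau>. b \<tau> \<omega>)) (labels \<omega>)} \<le> \<delta>"
proof -
  define A where "A P = {\<omega>\<in>space M. \<omega> \<in> pattern_event P \<and> Q P (labels \<omega>)}" for P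
  have A_sets: "A P \<in> sets M" for P
    using sets_label_event[of "\<lambda>P' \<phi> \<phi>'. P' = P \<and> Q P \<phi>"]
    by (simp add: A_def pattern_event_def conj_commute cong: conj_cong)
  have "0 \<le> prod_prob \<Phi> {0..J} bin_prob (Q (pattern undefined))"
    by (rule prod_prob_nonneg) (rule bin_prob_nonneg)
  then have "0 \<le> \<delta>"
    using assms[of undefined] by linarith
  have A_le: "measure M (A P) \<le> measure M (pattern_event P) * \<delta>" for P
  proof (cases "pattern_event P = {}")
    case False
    then obtain \<omega> where "pattern (\<lambda>\<tau>. b \<tau> \<omega>) = P"
      by (auto simp: pattern_event_def)
    then show ?thesis
      using assms[of "\<lambda>\<tau>. b \<tau> \<omega>"]
      by (simp add: A_def measure_labels_given_pattern mult_left_mono)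
  qed (simp add: A_def)
  have "{\<omega>\<in>space M. Q (pattern (\<lambda>\<tau>. b \<tau> \<omega>)) (labels \<omega>)} = (\<Union>P\<in>patterns. A P)"
    unfolding A_def pattern_event_def using pattern_in_patterns by auto
  then have "measure M {\<omega>\<in>space M. Q (pattern (\<lambda>\<tau>. b \<tau> \<omega>)) (labels \<omega>)} \<le> (\<Sum>P\<in>patterns. measure M (A P))"
    using M.finite_measure_subadditive_finite[OF finite_patterns] A_sets by auto
  also have "\<dots> \<le> (\<Sum>P\<in>patterns. measure M (pattern_event P)) * \<delta>"
    unfolding sum_distrib_right using A_le by (rule sum_mono)
  also have "(\<Sum>P\<in>patterns. measure M (pattern_event P)) = measure M (\<Union>P\<in>patterns. pattern_event P)"
    using finite_patterns sets_pattern_event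
    by (intro M.finite_measure_finite_Union[symmetric]) (auto simp: disjoint_family_on_def pattern_event_def)
  also have "\<dots> * \<delta> \<le> 1 * \<delta>"
    using \<open>0 \<le> \<delta>\<close> by (intro mult_right_mono) auto
  finally show ?thesis by simp
qed

lemma measure_initial_label_event:
  "measure M {\<omega>\<in>space M. Q (labels0 \<omega>)} = prod_prob {1..T0} {0..J} bin_prob Q"
proof -
  have "measure M {\<omega>\<in>space M. \<omega> \<in> space M \<and> Q (labels0 \<omega>)}
      = measure M (space M) * prod_prob {1..T0} {0..J} bin_prob Q"
    unfolding labels0_def bin_prob_eq[symmetric]
  proof (rule measure_label_event[OF prob_space_M _ _ _ m'_measurable bin_index_vimage_sets
        bin_index_range])
    fix A' :: "nat \<Rightarrow> real set" assume "\<forall>s\<in>{1..T0}. A' s \<in> sets borel"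
    then have "measure M {\<omega>\<in>space M. (\<lambda>\<tau>\<in>\<Phi>. b \<tau> \<omega>) \<in> space (PiM \<Phi> (\<lambda>_. borel))
          \<and> (\<forall>\<tau>\<in>\<Phi>. m \<tau> \<omega> \<in> UNIV) \<and> (\<forall>s\<in>{1..T0}. m' s \<omega> \<in> A' s)}
        = measure M {\<omega>\<in>space M. (\<lambda>\<tau>\<in>\<Phi>. b \<tau> \<omega>) \<in> space (PiM \<Phi> (\<lambda>_. borel))}
          * (\<Prod>\<tau>\<in>\<Phi>. measure D UNIV) * (\<Prod>s\<in>{1..T0}. measure D (A' s))"
      by (intro indep) auto
    then show "measure M {\<omega>\<in>space M. \<omega> \<in> space M \<and> (\<forall>s\<in>{1..T0}. m' s \<omega> \<in> A' s)}
        = measure M (space M) * (\<Prod>s\<in>{1..T0}. measure D (A' s))"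
      by (simp add: space_PiM measure_D_UNIV)
  qed auto
  then show ?thesis
    by (simp add: M.prob_space)
qed


section \<open>Concentration of the estimators\<close>

definition downclosed :: "('i \<Rightarrow> nat set) \<Rightarrow> bool" where
  "downclosed P \<longleftrightarrow> (\<forall>\<tau>\<in>\<Phi>. \<forall>i\<in>P \<tau>. \<forall>i'. 1 \<le> i' \<and> i' \<le> i \<longrightarrow> i' \<in> P \<tau>)"

lemma downclosed_pattern: "downclosed (pattern \<beta>)"
  unfolding downclosed_def pattern_def using bgrid_mono[OF T_pos] by (auto intro: order_trans)

lemma pcount_antimono: "downclosed P \<Longrightarrow> 1 \<le> i \<Longrightarrow> i \<le> j \<Longrightarrow> pcount P j \<le> pcount P i"
  unfolding pcount_def downclosed_def using finite_\<Phi> by (intro card_mono) auto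

lemma pcount_pos: "downclosed P \<Longrightarrow> 1 \<le> pcount P j \<Longrightarrow> i \<in> {1..j} \<Longrightarrow> 1 \<le> pcount P i"
  using pcount_antimono[of P i j] by auto

lemma freq0_nonneg: "0 \<le> freq0 \<phi>' k"
  unfolding freq0_def by (intro sum_nonneg) auto

definition var_proxy :: "('i \<Rightarrow> nat set) \<Rightarrow> nat \<Rightarrow> real" where
  "var_proxy P j = (\<Sum>i=1..j. bin_prob i / real (pcount P i))"

(* Bernstein's deviation bound for hat G(b^j) at confidence level T^(-8). *)
definition threshold :: "('i \<Rightarrow> nat set) \<Rightarrow> nat \<Rightarrow> real" where
  "threshold P j = 2 * sqrt (var_proxy P j * (8 * ln (real T)))
     + 2 * (1 / real (pcount P j)) * (8 * ln (real T)) / 3"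

definition estimate_fails :: "('i \<Rightarrow> nat set) \<Rightarrow> ('i \<Rightarrow> nat) \<Rightarrow> bool" where
  "estimate_fails P \<phi> \<longleftrightarrow>
     (\<exists>j\<in>{1..J}. 1 \<le> pcount P j \<and> threshold P j \<le> \<bar>Gest P \<phi> j - cdf D (bgrid T j)\<bar>)"

definition initial_fails :: "(nat \<Rightarrow> nat) \<Rightarrow> bool" where
  "initial_fails \<phi>' \<longleftrightarrow>
     (\<exists>k\<in>{1..J}. 2 * (freq0 \<phi>' k + 12 * ln (real T) / sqrt (real T)) < bin_prob k)"

lemma sum_weight_moment:
  assumes "j \<le> J" "f 0 = 0"
  shows "(\<Sum>\<tau>\<in>\<Phi>. \<Sum>l\<in>{0..J}. bin_prob l * f (weight P j \<tau> l))
    = (\<Sum>l=1..j. bin_prob l * (real (pcount P l) * f (1 / real (pcount P l))))"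
proof -
  have "(\<Sum>l\<in>{0..J}. bin_prob l * f (weight P j \<tau> l))
      = (\<Sum>l=1..j. if l \<in> P \<tau> then bin_prob l * f (1 / real (pcount P l)) else 0)" for \<tau>
  proof -
    have "(\<Sum>l\<in>{0..J}. bin_prob l * f (weight P j \<tau> l)) = (\<Sum>l=1..j. bin_prob l * f (weight P j \<tau> l))"
      using assms by (intro sum.mono_neutral_right) (auto simp: weight_def)
    then show ?thesis
      using assms by (auto simp: weight_def intro: sum.cong)
  qed
  then have "(\<Sum>\<tau>\<in>\<Phi>. \<Sum>l\<in>{0..J}. bin_prob l * f (weight P j \<tau> l))
      = (\<Sum>l=1..j. \<Sum>\<tau>\<in>\<Phi>. if l \<in> P \<tau> then bin_prob l * f (1 / real (pcount P l)) else 0)"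
    by (simp add: sum.swap[of _ \<Phi>])
  also have "\<dots> = (\<Sum>l=1..j. bin_prob l * (real (pcount P l) * f (1 / real (pcount P l))))"
    by (intro sum.cong refl) (simp add: sum.inter_filter[OF finite_\<Phi>, symmetric] pcount_def)
  finally show ?thesis .
qed

lemma sum_weight_mean:
  assumes "downclosed P" "j \<in> {1..J}" "1 \<le> pcount P j"
  shows "(\<Sum>\<tau>\<in>\<Phi>. \<Sum>l\<in>{0..J}. bin_prob l * weight P j \<tau> l) = cdf D (bgrid T j)"
proof -
  have "(\<Sum>\<tau>\<in>\<Phi>. \<Sum>l\<in>{0..J}. bin_prob l * weight P j \<tau> l)
      = (\<Sum>l=1..j. bin_prob l * (real (pcount P l) * (1 / real (pcount P l))))"
    using sum_weight_moment[of j "\<lambda>x. x" P] assms(2) by simp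
  also have "\<dots> = (\<Sum>l=1..j. bin_prob l)"
    using pcount_pos[OF assms(1,3)] by (intro sum.cong refl) fastforce
  finally show ?thesis
    using cdf_bgrid_eq[OF assms(2)] by simp
qed

lemma sum_weight_variance:
  assumes "downclosed P" "j \<in> {1..J}" "1 \<le> pcount P j"
  shows "(\<Sum>\<tau>\<in>\<Phi>. \<Sum>l\<in>{0..J}. bin_prob l * (weight P j \<tau> l)\<^sup>2) = var_proxy P j"
proof -
  have "(\<Sum>\<tau>\<in>\<Phi>. \<Sum>l\<in>{0..J}. bin_prob l * (weight P j \<tau> l)\<^sup>2)
      = (\<Sum>l=1..j. bin_prob l * (real (pcount P l) * (1 / real (pcount P l))\<^sup>2))"
    using sum_weight_moment[of j "\<lambda>x. x\<^sup>2" P] assms(2) by simp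
  also have "\<dots> = var_proxy P j"
    unfolding var_proxy_def using pcount_pos[OF assms(1,3)]
    by (intro sum.cong refl) (fastforce simp: power2_eq_square)
  finally show ?thesis .
qed

lemma weight_bounds:
  assumes "downclosed P" "1 \<le> pcount P j"
  shows "0 \<le> weight P j \<tau> l \<and> weight P j \<tau> l \<le> 1 / real (pcount P j)"
proof (cases "l \<in> {1..j} \<and> l \<in> P \<tau>")
  case True
  then have "pcount P j \<le> pcount P l"
    using pcount_antimono[OF assms(1)] by auto
  then show ?thesis
    using True assms(2) by (auto simp: weight_def intro!: divide_left_mono)
qed (auto simp: weight_def)

lemma estimate_tail:
  assumes "downclosed P" "j \<in> {1..J}" "1 \<le> pcount P j" and \<sigma>: "\<sigma> = 1 \<or> \<sigma> = -1"
  shows "prod_prob \<Phi> {0..J} bin_prob (\<lambda>\<phi>. threshold P j \<le> \<sigma> * (Gest P \<phi> j - cdf D (bgrid T j)))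
    \<le> exp (- (8 * ln (real T)))"
proof -
  let ?\<mu> = "\<lambda>\<tau>. \<Sum>l\<in>{0..J}. bin_prob l * weight P j \<tau> l"
  have "prod_prob \<Phi> {0..J} bin_prob (\<lambda>\<phi>. threshold P j \<le> \<sigma> * (Gest P \<phi> j - cdf D (bgrid T j)))
      \<le> prod_prob \<Phi> {0..J} bin_prob (\<lambda>\<phi>. threshold P j \<le> (\<Sum>\<tau>\<in>\<Phi>. \<sigma> * (weight P j \<tau> (\<phi> \<tau>) - ?\<mu> \<tau>)))"
    using sum_weight_mean[OF assms(1-3)] bin_prob_nonneg
    by (intro prod_prob_mono) (simp_all add: Gest_def sum_distrib_left[symmetric] sum_subtractf)
  also have "\<dots> \<le> exp (- (8 * ln (real T)))"
  proof (rule prod_prob_Bernstein[OF finite_\<Phi> _ _ sum_bin_prob _ _ \<sigma>])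
    show "0 < 1 / real (pcount P j)" "0 \<le> 8 * ln (real T)"
      using assms(3) ln_T_pos by auto
    show "2 * sqrt (var_proxy P j * (8 * ln (real T))) + 2 * (1 / real (pcount P j)) * (8 * ln (real T)) / 3
        \<le> threshold P j"
      by (simp add: threshold_def)
  qed (use sum_weight_variance[OF assms(1-3)] weight_bounds[OF assms(1,3)] bin_prob_nonneg in auto)
  finally show ?thesis .
qed

lemma estimate_failure_prob:
  assumes "downclosed P"
  shows "prod_prob \<Phi> {0..J} bin_prob (estimate_fails P) \<le> 2 * real J * exp (- (8 * ln (real T)))"
proof -
  let ?e = "exp (- (8 * ln (real T)))"
  let ?d = "\<lambda>\<phi> j. Gest P \<phi> j - cdf D (bgrid T j)"
  have "prod_prob \<Phi> {0..J} bin_prob (estimate_fails P)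
      \<le> (\<Sum>j\<in>{1..J}. prod_prob \<Phi> {0..J} bin_prob (\<lambda>\<phi>. 1 \<le> pcount P j \<and> threshold P j \<le> \<bar>?d \<phi> j\<bar>))"
    unfolding estimate_fails_def[abs_def] by (rule prod_prob_Bex_le) (auto simp: bin_prob_nonneg)
  also have "\<dots> \<le> (\<Sum>j\<in>{1..J}. 2 * ?e)"
  proof (rule sum_mono)
    fix j assume "j \<in> {1..J}"
    show "prod_prob \<Phi> {0..J} bin_prob (\<lambda>\<phi>. 1 \<le> pcount P j \<and> threshold P j \<le> \<bar>?d \<phi> j\<bar>) \<le> 2 * ?e"
    proof (cases "1 \<le> pcount P j")
      case True
      have "prod_prob \<Phi> {0..J} bin_prob (\<lambda>\<phi>. 1 \<le> pcount P j \<and> threshold P j \<le> \<bar>?d \<phi> j\<bar>)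
          \<le> prod_prob \<Phi> {0..J} bin_prob (\<lambda>\<phi>. threshold P j \<le> 1 * ?d \<phi> j \<or> threshold P j \<le> -1 * ?d \<phi> j)"
        by (rule prod_prob_mono) (auto simp: bin_prob_nonneg abs_if split: if_splits)
      also have "\<dots> \<le> prod_prob \<Phi> {0..J} bin_prob (\<lambda>\<phi>. threshold P j \<le> 1 * ?d \<phi> j)
          + prod_prob \<Phi> {0..J} bin_prob (\<lambda>\<phi>. threshold P j \<le> -1 * ?d \<phi> j)"
        by (rule prod_prob_disj_le) (rule bin_prob_nonneg)
      also have "\<dots> \<le> ?e + ?e"
        using \<open>j \<in> {1..J}\<close> True by (intro add_mono estimate_tail[OF assms]) auto
      finally show ?thesis
        by simp
    qed (simp add: prod_prob_eq_0)
  qed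
  finally show ?thesis
    by simp
qed

lemma initial_tail:
  assumes k: "k \<in> {1..J}"
  shows "prod_prob {1..T0} {0..J} bin_prob
      (\<lambda>\<phi>'. 2 * (freq0 \<phi>' k + 12 * ln (real T) / sqrt (real T)) < bin_prob k)
    \<le> exp (- (8 * ln (real T)))"
proof (cases "bin_prob k = 0")
  case True
  have "0 \<le> 2 * (freq0 \<phi>' k + 12 * ln (real T) / sqrt (real T))" for \<phi>'
    using freq0_nonneg[of \<phi>' k] ln_T_pos sqrt_T_pos by simp
  then show ?thesis
    using True by (subst prod_prob_eq_0) (auto simp: not_less)
next
  case False
  have "sqrt (real T) \<le> real T0"
    using T0_ge le_of_int_ceiling[of "sqrt (real T)"] sqrt_T_pos by linarith
  then have "0 < real T0"
    using sqrt_T_pos by linarith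
  define w where "w s l = (if l = k then 1 / real T0 else 0)" for s l :: nat
  define V where "V = bin_prob k / (2 * real T0)"
  have mean: "(\<Sum>l\<in>{0..J}. bin_prob l * w s l) = bin_prob k / real T0" for s
    using k by (simp add: w_def if_distrib sum.delta cong: if_cong)
  have w_sq: "(w s l)\<^sup>2 = (if l = k then 1 / (real T0)\<^sup>2 else 0)" for s l
    by (simp add: w_def power_divide)
  have "(\<Sum>l\<in>{0..J}. bin_prob l * (w s l)\<^sup>2) = bin_prob k / (real T0)\<^sup>2" for s
    unfolding w_sq using k by (simp add: if_distrib sum.delta cong: if_cong)
  then have var: "(\<Sum>s\<in>{1..T0}. \<Sum>l\<in>{0..J}. bin_prob l * (w s l)\<^sup>2) / 2 \<le> V"
    using \<open>0 < real T0\<close> by (simp add: V_def power2_eq_square)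
  have dev: "(\<Sum>s\<in>{1..T0}. (\<Sum>l\<in>{0..J}. bin_prob l * w s l) - w s (\<phi>' s)) = bin_prob k - freq0 \<phi>' k"
    for \<phi>'
    unfolding mean using \<open>0 < real T0\<close> by (simp add: sum_subtractf freq0_def w_def)
  have gap: "2 * sqrt (V * (8 * ln (real T))) \<le> bin_prob k - freq0 \<phi>' k"
    if "2 * (freq0 \<phi>' k + 12 * ln (real T) / sqrt (real T)) < bin_prob k" for \<phi>'
    unfolding V_def using ln_T_pos
    by (intro sqrt_threshold_le_gap[OF bin_prob_nonneg _ sqrt_T_pos \<open>sqrt (real T) \<le> real T0\<close> that]) simp
  have "prod_prob {1..T0} {0..J} bin_prob
      (\<lambda>\<phi>'. 2 * (freq0 \<phi>' k + 12 * ln (real T) / sqrt (real T)) < bin_prob k)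
    \<le> prod_prob {1..T0} {0..J} bin_prob (\<lambda>\<phi>'. 2 * sqrt (V * (8 * ln (real T)))
        \<le> (\<Sum>s\<in>{1..T0}. (\<Sum>l\<in>{0..J}. bin_prob l * w s l) - w s (\<phi>' s)))"
    unfolding dev by (intro prod_prob_mono bin_prob_nonneg gap)
  also have "\<dots> \<le> exp (- (8 * ln (real T)))"
  proof (rule prod_prob_lower_tail[OF _ _ bin_prob_nonneg sum_bin_prob _ var])
    show "0 < V"
      using False bin_prob_nonneg[of k] \<open>0 < real T0\<close> by (simp add: V_def)
    show "0 \<le> 8 * ln (real T)"
      using ln_T_pos by simp
  qed (auto simp: w_def)
  finally show ?thesis .
qed

lemma initial_failure_prob:
  "prod_prob {1..T0} {0..J} bin_prob initial_fails \<le> real J * exp (- (8 * ln (real T)))"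
proof -
  have "prod_prob {1..T0} {0..J} bin_prob initial_fails
    \<le> (\<Sum>k\<in>{1..J}. prod_prob {1..T0} {0..J} bin_prob
      (\<lambda>\<phi>'. 2 * (freq0 \<phi>' k + 12 * ln (real T) / sqrt (real T)) < bin_prob k))"
    unfolding initial_fails_def[abs_def] by (rule prod_prob_Bex_le) (auto simp: bin_prob_nonneg)
  also have "\<dots> \<le> (\<Sum>k\<in>{1..J}. exp (- (8 * ln (real T))))"
    by (intro sum_mono initial_tail)
  finally show ?thesis
    by simp
qed

definition dev_bound :: "('i \<Rightarrow> nat set) \<Rightarrow> (nat \<Rightarrow> nat) \<Rightarrow> nat \<Rightarrow> real" where
  "dev_bound P \<phi>' j = 4 * sqrt 2 * sqrt (width_sum P \<phi>' j) + 16 / 3 * ln (real T) / real (pcount P j)"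

lemma threshold_le_dev_bound:
  assumes "\<And>k. k \<in> {1..j} \<Longrightarrow> bin_prob k \<le> 2 * (freq0 \<phi>' k + 12 * ln (real T) / sqrt (real T))"
  shows "threshold P j \<le> dev_bound P \<phi>' j"
proof -
  have "var_proxy P j * (8 * ln (real T)) \<le> 8 * width_sum P \<phi>' j"
    unfolding var_proxy_def width_sum_def sum_distrib_left sum_distrib_right
  proof (rule sum_mono)
    fix k assume "k \<in> {1..j}"
    then have "bin_prob k * (8 * ln (real T))
        \<le> 2 * (freq0 \<phi>' k + 12 * ln (real T) / sqrt (real T)) * (8 * ln (real T))"
      using assms ln_T_pos by (intro mult_right_mono) auto
    then show "bin_prob k / real (pcount P k) * (8 * ln (real T))
        \<le> 8 * (2 * ln (real T) / real (pcount P k) * (freq0 \<phi>' k + 12 * ln (real T) / sqrt (real T)))"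
      by (simp add: divide_right_mono field_simps)
  qed
  then have "sqrt (var_proxy P j * (8 * ln (real T))) \<le> sqrt 8 * sqrt (width_sum P \<phi>' j)"
    by (simp add: real_sqrt_mult[symmetric])
  also have "sqrt (8::real) = sqrt (4 * 2)"
    by simp
  also have "\<dots> = sqrt 4 * sqrt 2"
    by (rule real_sqrt_mult)
  also have "sqrt (4::real) = 2"
    by (rule real_sqrt_unique) auto
  finally show ?thesis
    unfolding threshold_def dev_bound_def by (simp add: field_simps)
qed

lemma dev_bound_mono:
  assumes "downclosed P" "1 \<le> i" "i \<le> j" "1 \<le> pcount P j"
  shows "dev_bound P \<phi>' i \<le> dev_bound P \<phi>' j"
proof -
  have "width_sum P \<phi>' i \<le> width_sum P \<phi>' j"
    unfolding width_sum_def using assms ln_T_pos freq0_nonneg sqrt_T_pos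
    by (intro sum_mono2) (auto intro!: mult_nonneg_nonneg add_nonneg_nonneg)
  then have "4 * sqrt 2 * sqrt (width_sum P \<phi>' i) \<le> 4 * sqrt 2 * sqrt (width_sum P \<phi>' j)"
    by (intro mult_left_mono) auto
  moreover have "16 / 3 * ln (real T) / real (pcount P i) \<le> 16 / 3 * ln (real T) / real (pcount P j)"
    using pcount_antimono[OF assms(1-3)] assms(4) ln_T_pos by (intro divide_left_mono) auto
  ultimately show ?thesis
    unfolding dev_bound_def by linarith
qed

lemma sqrt2_dev_bound_le:
  assumes "1 \<le> pcount P j"
  shows "sqrt 2 * dev_bound P \<phi>' j \<le> 8 * sqrt (width_sum P \<phi>' j) + 8 * ln (real T) / real (pcount P j)"
proof -
  have "sqrt 2 \<le> (3/2 :: real)"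
    by (rule power2_le_imp_le) (auto simp: power2_eq_square)
  then have "sqrt 2 * (16 / 3) * ln (real T) / real (pcount P j) \<le> 8 * ln (real T) / real (pcount P j)"
    using ln_T_pos assms by (intro divide_right_mono mult_right_mono) auto
  moreover have "sqrt 2 * dev_bound P \<phi>' j
      = 4 * (sqrt 2 * sqrt 2) * sqrt (width_sum P \<phi>' j) + sqrt 2 * (16 / 3) * ln (real T) / real (pcount P j)"
    unfolding dev_bound_def by (simp add: algebra_simps)
  ultimately show ?thesis
    by simp
qed

lemma error_le_dev_bound:
  assumes "downclosed P" "\<not> estimate_fails P \<phi>" "\<not> initial_fails \<phi>'"
    and "j \<in> {1..J}" "1 \<le> pcount P j" "i \<in> {1..j}"
  shows "\<bar>cdf D (bgrid T i) - Gest P \<phi> i\<bar> \<le> dev_bound P \<phi>' j"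
proof -
  have "1 \<le> pcount P i"
    using pcount_pos assms by blast
  then have "\<bar>cdf D (bgrid T i) - Gest P \<phi> i\<bar> \<le> threshold P i"
    using assms(2,4,6) by (auto simp: estimate_fails_def abs_minus_commute)
  also have "\<dots> \<le> dev_bound P \<phi>' i"
    using assms(3,4,6) by (intro threshold_le_dev_bound) (auto simp: initial_fails_def not_less)
  also have "\<dots> \<le> dev_bound P \<phi>' j"
    using assms by (intro dev_bound_mono) auto
  finally show ?thesis .
qed

lemma good_unless_fails:
  assumes "downclosed P" "\<not> estimate_fails P \<phi>" "\<not> initial_fails \<phi>'"
  shows "good P \<phi> \<phi>'"
  unfolding good_def
proof
  fix j assume j: "j \<in> {1..J}"
  show "ereal \<bar>cdf D (bgrid T j) - Gest P \<phi> j\<bar> \<le> width P \<phi>' j \<and>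
      ereal (1 / sqrt (real T) * \<bar>\<Sum>i=1..j. cdf D (bgrid T i) - Gest P \<phi> i\<bar>) \<le> width P \<phi>' j"
  proof (cases "\<exists>k\<in>{1..j}. pcount P k = 0")
    case True
    then show ?thesis
      by (simp add: width_def)
  next
    case False
    then have "1 \<le> pcount P j"
      using j by force
    note error = error_le_dev_bound[OF assms j this]
    then have "0 \<le> dev_bound P \<phi>' j"
      using j by (meson abs_ge_zero atLeastAtMost_iff order_trans order_refl)
    have "\<bar>\<Sum>i=1..j. cdf D (bgrid T i) - Gest P \<phi> i\<bar> \<le> (\<Sum>i=1..j. \<bar>cdf D (bgrid T i) - Gest P \<phi> i\<bar>)"
      by (rule sum_abs)
    also have "\<dots> \<le> (\<Sum>i=1..j. dev_bound P \<phi>' j)"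
      using error by (rule sum_mono)
    also have "\<dots> = real j * dev_bound P \<phi>' j"
      by simp
    also have "\<dots> \<le> sqrt 2 * sqrt (real T) * dev_bound P \<phi>' j"
      using le_Jnum_imp_le_sqrt[OF T_pos, of j] j \<open>0 \<le> dev_bound P \<phi>' j\<close>
      by (intro mult_right_mono) auto
    finally have "1 / sqrt (real T) * \<bar>\<Sum>i=1..j. cdf D (bgrid T i) - Gest P \<phi> i\<bar> \<le> sqrt 2 * dev_bound P \<phi>' j"
      using sqrt_T_pos by (simp add: pos_divide_le_eq mult_ac)
    moreover have "dev_bound P \<phi>' j \<le> sqrt 2 * dev_bound P \<phi>' j"
      using \<open>0 \<le> dev_bound P \<phi>' j\<close> by (simp add: mult_le_cancel_right1)
    moreover have "width P \<phi>' j = ereal (8 * sqrt (width_sum P \<phi>' j) + 8 * ln (real T) / real (pcount P j))"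
      using False by (simp add: width_def)
    ultimately show ?thesis
      using error[of j] sqrt2_dev_bound_le[OF \<open>1 \<le> pcount P j\<close>, of \<phi>'] j by auto
  qed
qed

theorem confidence_bound:
  "1 - 1 / real T ^ 3 \<le> measure M {\<omega> \<in> space M. \<forall>j\<in>{1..J}.
      ereal \<bar>cdf D (bgrid T j) - Ghat T \<Phi> (\<lambda>\<tau>. b \<tau> \<omega>) (\<lambda>\<tau>. m \<tau> \<omega>) j\<bar>
        \<le> ubound T T0 \<Phi> (\<lambda>\<tau>. b \<tau> \<omega>) (\<lambda>s. m' s \<omega>) j
      \<and> ereal ((1 / sqrt (real T)) * \<bar>\<Sum>i=1..j. cdf D (bgrid T i) - Ghat T \<Phi> (\<lambda>\<tau>. b \<tau> \<omega>) (\<lambda>\<tau>. m \<tau> \<omega>) i\<bar>)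
        \<le> ubound T T0 \<Phi> (\<lambda>\<tau>. b \<tau> \<omega>) (\<lambda>s. m' s \<omega>) j}"
proof -
  let ?e = "exp (- (8 * ln (real T)))"
  define E where "E = {\<omega>\<in>space M. estimate_fails (pattern (\<lambda>\<tau>. b \<tau> \<omega>)) (labels \<omega>)}"
  define E0 where "E0 = {\<omega>\<in>space M. initial_fails (labels0 \<omega>)}"
  define G where "G = {\<omega>\<in>space M. good (pattern (\<lambda>\<tau>. b \<tau> \<omega>)) (labels \<omega>) (labels0 \<omega>)}"
  have "E \<in> sets M" "E0 \<in> sets M" "G \<in> sets M"
    unfolding E_def E0_def G_def by (fact sets_label_event)+
  have "measure M E \<le> 2 * real J * ?e"
    unfolding E_def by (intro measure_pattern_label_event_le estimate_failure_prob downclosed_pattern)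
  moreover have "measure M E0 \<le> real J * ?e"
    unfolding E0_def measure_initial_label_event by (rule initial_failure_prob)
  moreover have "space M - G \<subseteq> E \<union> E0"
    using good_unless_fails[OF downclosed_pattern] by (auto simp: E_def E0_def G_def)
  then have "measure M (space M - G) \<le> measure M E + measure M E0"
    using \<open>E \<in> sets M\<close> \<open>E0 \<in> sets M\<close> by (meson M.finite_measure_mono measure_Un_le order_trans sets.Un)
  ultimately have "measure M (space M - G) \<le> 1 / real T ^ 3"
    using Jnum_exp_le[OF T_ge_2] by linarith
  then show ?thesis
    using M.prob_compl[OF \<open>G \<in> sets M\<close>] unfolding event_eq_good G_def by linarith
qed

end

theorem lemma1:
  fixes M :: "'a measure" and D :: "real measure"
    and T T0 :: nat and \<Phi> :: "'i set"
    and b m :: "'i \<Rightarrow> 'a \<Rightarrow> real" and m' :: "nat \<Rightarrow> 'a \<Rightarrow> real"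
  assumes "prob_space M"
    and "T \<ge> 2"
    and "prob_space D" and "sets D = sets borel" and "emeasure D {0..1} = 1"
    and "finite \<Phi>"
    and "T0 \<ge> nat \<lceil>sqrt (real T)\<rceil>"
    and "\<And>\<tau>. \<tau> \<in> \<Phi> \<Longrightarrow> b \<tau> \<in> borel_measurable M"
    and "\<And>\<tau>. \<tau> \<in> \<Phi> \<Longrightarrow> m \<tau> \<in> borel_measurable M"
    and "\<And>s. s \<in> {1..T0} \<Longrightarrow> m' s \<in> borel_measurable M"
    and "\<And>\<tau> \<omega>. \<tau> \<in> \<Phi> \<Longrightarrow> \<omega> \<in> space M \<Longrightarrow> b \<tau> \<omega> \<in> {0..1}"
    and indep: "\<And>B A A'. B \<in> sets (PiM \<Phi> (\<lambda>_. borel)) \<Longrightarrow>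
        (\<forall>\<tau>\<in>\<Phi>. A \<tau> \<in> sets borel) \<Longrightarrow> (\<forall>s\<in>{1..T0}. A' s \<in> sets borel) \<Longrightarrow>
        measure M {\<omega> \<in> space M. (\<lambda>\<tau>\<in>\<Phi>. b \<tau> \<omega>) \<in> B \<and> (\<forall>\<tau>\<in>\<Phi>. m \<tau> \<omega> \<in> A \<tau>)
                                  \<and> (\<forall>s\<in>{1..T0}. m' s \<omega> \<in> A' s)}
        = measure M {\<omega> \<in> space M. (\<lambda>\<tau>\<in>\<Phi>. b \<tau> \<omega>) \<in> B}
          * (\<Prod>\<tau>\<in>\<Phi>. measure D (A \<tau>)) * (\<Prod>s\<in>{1..T0}. measure D (A' s))"
  shows "measure M {\<omega> \<in> space M. \<forall>j\<in>{1..Jnum T}.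
            ereal \<bar>cdf D (bgrid T j) - Ghat T \<Phi> (\<lambda>\<tau>. b \<tau> \<omega>) (\<lambda>\<tau>. m \<tau> \<omega>) j\<bar>
              \<le> ubound T T0 \<Phi> (\<lambda>\<tau>. b \<tau> \<omega>) (\<lambda>s. m' s \<omega>) j
          \<and> ereal ((1 / sqrt (real T)) * \<bar>\<Sum>i=1..j. cdf D (bgrid T i) - Ghat T \<Phi> (\<lambda>\<tau>. b \<tau> \<omega>) (\<lambda>\<tau>. m \<tau> \<omega>) i\<bar>)
              \<le> ubound T T0 \<Phi> (\<lambda>\<tau>. b \<tau> \<omega>) (\<lambda>s. m' s \<omega>) j}
         \<ge> 1 - 1 / real T ^ 3"
proof -
  (* The bids only enter through the grid points they exceed. *)
  interpret cdf_estimation T D M T0 \<Phi> b m m'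
    by (rule cdf_estimation.intro[OF grid_bins.intro cdf_estimation_axioms.intro]) (fact assms)+
  show ?thesis
    by (fact confidence_bound)
qed

end
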